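(* Let $\sigma\in\prod_{i\in N}\Delta(A_i)$ be (1) a strict Nash equilibrium of $G$, or (2) a completely mixed Nash equilibrium of $G$ (every pure action of every player has positive probability), or (3) the unique Nash equilibrium of $G$. Then $\sigma$ is stable under no observability.
   Context: Objective game: $G=(N,A,\pi)$ is a finite $n$-player normal-form game, $N=\{1,\dots,n\}$, finite action sets $A_i$, $A=\prod_iA_i$, fitness functions $\pi_i:A\to\mathbb{R}$ extended multilinearly to $\prod_i\Delta(A_i)$. Preference types: $\Theta=\mathbb{R}^A$ (extended multilinearly). $\mathcal{M}(\Theta^n)$: product distributions $\mu=\mu_1\times\dots\times\mu_n$ on $\Theta^n$ with finitely supported marginals; $\operatorname{supp}\mu=\prod_i\operatorname{supp}\mu_i$, $\mu_{-i}(\theta_{-i})=\prod_{j\neq i}\mu_j(\theta_j)$. Mutants: for nonempty $J\subseteq N$, a mutant sub-profile is $\tilde\theta_J\in\prod_{j\in J}(\Theta\setminus\operatorname{supp}\mu_j)$ with shares $\varepsilon\in(0,1)^{|J|}$, $\|\varepsilon\|=\max_j\varepsilon_j$; post-entry $\tilde\mu^\varepsilon_i=(1-\varepsilon_i)\mu_i+\varepsilon_i\delta_{\tilde\theta_i}$ for $i\in J$, $\tilde\mu^\varepsilon_i=\mu_i$ otherwise. No observability: a strategy of player $i$ is $s_i:\operatorname{supp}\mu_i\to\Delta(A_i)$, $s(\theta)=(s_1(\theta_1),\dots,s_n(\theta_n))$; $s$ is a Bayesian–Nash equilibrium if for each $i$ and $\theta_i\in\operatorname{supp}\mu_i$, $s_i(\theta_i)\in\arg\max_{\sigma_i\in\Delta(A_i)}\sum_{\theta'_{-i}\in\operatorname{supp}\mu_{-i}}\mu_{-i}(\theta'_{-i})\theta_i(\sigma_i,s_{-i}(\theta'_{-i}))$;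 $B_0(\mu)$ is the set of these; $(\mu,s)$ with $s\in B_0(\mu)$ is a configuration, with aggregate outcome $x(\mu,s)=\big(\sum_{\theta_i}\mu_i(\theta_i)s_i(\theta_i)\big)_{i}$. Average fitness: $\Pi_{\theta_i}(\mu;s)=\pi_i(s_i(\theta_i),x(\mu,s)_{-i})$. Balanced: all types in each $\operatorname{supp}\mu_i$ have equal average fitness. Nearby set: for $\eta\ge0$, $B_0^\eta(\tilde\mu^\varepsilon;s)=\{\tilde s\in B_0(\tilde\mu^\varepsilon):\max_{i}\|\tilde s_i(\theta_i)-s_i(\theta_i)\|\le\eta\ \forall\theta\in\operatorname{supp}\mu\}$ (Euclidean norm). $(\mu,s)$ is stable if it is balanced and for every nonempty $J\subseteq N$, every $\tilde\theta_J$ and every $\eta>0$ there exist $\bar\eta\in[0,\eta)$ and $\bar\epsilon\in(0,1)$ such that for every $\varepsilon$ with $\|\varepsilon\|\in(0,\bar\epsilon)$, $B_0^{\bar\eta}(\tilde\mu^\varepsilon;s)\neq\emptyset$ and every $\tilde s\in B_0^{\bar\eta}(\tilde\mu^\varepsilon;s)$ satisfies either (i) some $j\in J$ has $\Pi_{\theta_j}(\tilde\mu^\varepsilon;\tilde s)>\Pi_{\tilde\theta_j}(\tilde\mu^\varepsilon;\tilde s)$ for all $\theta_j\in\operatorname{supp}\mu_j$, or (ii) for every $i$ all types in $\operatorname{supp}\tilde\mu^\varepsilon_i$ have equal average fitness under $(\tilde\mu^\varepsilon,\tilde s)$. A profile $\sigma$ is stable under no observability if $\sigma=x(\mu,s)$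 for some stable configuration $(\mu,s)$. *)

theory Defs
  imports Complex_Main "HOL-Library.FuncSet"
begin

(* Players are 0..<n (the paper's 1..n); A i is the finite action set of player i.
   A preference type is a real function on pure profiles (zero outside the profile set,
   so that Theta = R^A is represented faithfully). *)

type_synonym 'a ptype = "(nat \<Rightarrow> 'a) \<Rightarrow> real"

definition mixed_strategy :: "'a set \<Rightarrow> ('a \<Rightarrow> real) \<Rightarrow> bool" where
  "mixed_strategy Ai t \<longleftrightarrow> (\<forall>a\<in>Ai. 0 \<le> t a) \<and> (\<Sum>a\<in>Ai. t a) = 1 \<and> (\<forall>a. a \<notin> Ai \<longrightarrow> t a = 0)"

definition mixed_profile :: "nat \<Rightarrow> (nat \<Rightarrow> 'a set) \<Rightarrow> (nat \<Rightarrow> 'a \<Rightarrow> real) \<Rightarrow> bool" where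
  "mixed_profile n A \<sigma> \<longleftrightarrow> (\<forall>i<n. mixed_strategy (A i) (\<sigma> i))"

definition mlext :: "nat \<Rightarrow> (nat \<Rightarrow> 'a set) \<Rightarrow> 'a ptype \<Rightarrow> (nat \<Rightarrow> 'a \<Rightarrow> real) \<Rightarrow> real" where
  "mlext n A u \<sigma> = (\<Sum>a\<in>PiE {..<n} A. (\<Prod>i<n. \<sigma> i (a i)) * u a)"

definition nash_eq :: "nat \<Rightarrow> (nat \<Rightarrow> 'a set) \<Rightarrow> (nat \<Rightarrow> 'a ptype) \<Rightarrow> (nat \<Rightarrow> 'a \<Rightarrow> real) \<Rightarrow> bool" where
  "nash_eq n A \<pi> \<sigma> \<longleftrightarrow> mixed_profile n A \<sigma> \<and>
     (\<forall>i<n. \<forall>t. mixed_strategy (A i) t \<longrightarrow> mlext n A (\<pi> i) (\<sigma>(i := t)) \<le> mlext n A (\<pi> i) \<sigma>)"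

definition strict_nash_eq :: "nat \<Rightarrow> (nat \<Rightarrow> 'a set) \<Rightarrow> (nat \<Rightarrow> 'a ptype) \<Rightarrow> (nat \<Rightarrow> 'a \<Rightarrow> real) \<Rightarrow> bool" where
  "strict_nash_eq n A \<pi> \<sigma> \<longleftrightarrow> nash_eq n A \<pi> \<sigma> \<and>
     (\<forall>i<n. \<forall>t. mixed_strategy (A i) t \<and> t \<noteq> \<sigma> i \<longrightarrow> mlext n A (\<pi> i) (\<sigma>(i := t)) < mlext n A (\<pi> i) \<sigma>)"

definition completely_mixed :: "nat \<Rightarrow> (nat \<Rightarrow> 'a set) \<Rightarrow> (nat \<Rightarrow> 'a \<Rightarrow> real) \<Rightarrow> bool" where
  "completely_mixed n A \<sigma> \<longleftrightarrow> (\<forall>i<n. \<forall>a\<in>A i. 0 < \<sigma> i a)"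

definition unique_nash_eq :: "nat \<Rightarrow> (nat \<Rightarrow> 'a set) \<Rightarrow> (nat \<Rightarrow> 'a ptype) \<Rightarrow> (nat \<Rightarrow> 'a \<Rightarrow> real) \<Rightarrow> bool" where
  "unique_nash_eq n A \<pi> \<sigma> \<longleftrightarrow> nash_eq n A \<pi> \<sigma> \<and>
     (\<forall>\<sigma>'. nash_eq n A \<pi> \<sigma>' \<longrightarrow> (\<forall>i<n. \<sigma>' i = \<sigma> i))"

definition types :: "nat \<Rightarrow> (nat \<Rightarrow> 'a set) \<Rightarrow> 'a ptype set" where
  "types n A = {\<theta>. \<forall>a. a \<notin> PiE {..<n} A \<longrightarrow> \<theta> a = 0}"

definition supp :: "('b \<Rightarrow> real) \<Rightarrow> 'b set" where
  "supp m = {x. m x \<noteq> 0}"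

definition population :: "nat \<Rightarrow> (nat \<Rightarrow> 'a set) \<Rightarrow> (nat \<Rightarrow> 'a ptype \<Rightarrow> real) \<Rightarrow> bool" where
  "population n A \<mu> \<longleftrightarrow> (\<forall>i<n. finite (supp (\<mu> i)) \<and> supp (\<mu> i) \<subseteq> types n A \<and>
      (\<forall>\<theta>. 0 \<le> \<mu> i \<theta>) \<and> (\<Sum>\<theta>\<in>supp (\<mu> i). \<mu> i \<theta>) = 1)"

definition exp_util ::
  "nat \<Rightarrow> (nat \<Rightarrow> 'a set) \<Rightarrow> (nat \<Rightarrow> 'a ptype \<Rightarrow> real) \<Rightarrow> (nat \<Rightarrow> 'a ptype \<Rightarrow> 'a \<Rightarrow> real)
    \<Rightarrow> nat \<Rightarrow> 'a ptype \<Rightarrow> ('a \<Rightarrow> real) \<Rightarrow> real" where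
  "exp_util n A \<mu> s i \<theta>i t =
     (\<Sum>\<theta>'\<in>PiE ({..<n} - {i}) (\<lambda>j. supp (\<mu> j)).
        (\<Prod>j\<in>{..<n} - {i}. \<mu> j (\<theta>' j)) * mlext n A \<theta>i ((\<lambda>j. s j (\<theta>' j))(i := t)))"

definition BNE_set ::
  "nat \<Rightarrow> (nat \<Rightarrow> 'a set) \<Rightarrow> (nat \<Rightarrow> 'a ptype \<Rightarrow> real) \<Rightarrow> (nat \<Rightarrow> 'a ptype \<Rightarrow> 'a \<Rightarrow> real) set" where
  "BNE_set n A \<mu> = {s. \<forall>i<n. \<forall>\<theta>i\<in>supp (\<mu> i). mixed_strategy (A i) (s i \<theta>i) \<and>
      (\<forall>t. mixed_strategy (A i) t \<longrightarrow> exp_util n A \<mu> s i \<theta>i t \<le> exp_util n A \<mu> s i \<theta>i (s i \<theta>i))}"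

definition aggregate ::
  "(nat \<Rightarrow> 'a ptype \<Rightarrow> real) \<Rightarrow> (nat \<Rightarrow> 'a ptype \<Rightarrow> 'a \<Rightarrow> real) \<Rightarrow> nat \<Rightarrow> 'a \<Rightarrow> real" where
  "aggregate \<mu> s i = (\<lambda>a. \<Sum>\<theta>\<in>supp (\<mu> i). \<mu> i \<theta> * s i \<theta> a)"

definition avg_fitness ::
  "nat \<Rightarrow> (nat \<Rightarrow> 'a set) \<Rightarrow> (nat \<Rightarrow> 'a ptype) \<Rightarrow> (nat \<Rightarrow> 'a ptype \<Rightarrow> real)
    \<Rightarrow> (nat \<Rightarrow> 'a ptype \<Rightarrow> 'a \<Rightarrow> real) \<Rightarrow> nat \<Rightarrow> 'a ptype \<Rightarrow> real" where
  "avg_fitness n A \<pi> \<mu> s i \<theta> = mlext n A (\<pi> i) ((aggregate \<mu> s)(i := s i \<theta>))"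

definition balanced ::
  "nat \<Rightarrow> (nat \<Rightarrow> 'a set) \<Rightarrow> (nat \<Rightarrow> 'a ptype) \<Rightarrow> (nat \<Rightarrow> 'a ptype \<Rightarrow> real)
    \<Rightarrow> (nat \<Rightarrow> 'a ptype \<Rightarrow> 'a \<Rightarrow> real) \<Rightarrow> bool" where
  "balanced n A \<pi> \<mu> s \<longleftrightarrow> (\<forall>i<n. \<forall>\<theta>\<in>supp (\<mu> i). \<forall>\<theta>'\<in>supp (\<mu> i).
      avg_fitness n A \<pi> \<mu> s i \<theta> = avg_fitness n A \<pi> \<mu> s i \<theta>')"

definition post_entry ::
  "(nat \<Rightarrow> 'a ptype \<Rightarrow> real) \<Rightarrow> nat set \<Rightarrow> (nat \<Rightarrow> 'a ptype) \<Rightarrow> (nat \<Rightarrow> real) \<Rightarrow> nat \<Rightarrow> 'a ptype \<Rightarrow> real" where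
  "post_entry \<mu> J \<theta>m \<epsilon> i \<theta> =
     (if i \<in> J then (1 - \<epsilon> i) * \<mu> i \<theta> + (if \<theta> = \<theta>m i then \<epsilon> i else 0) else \<mu> i \<theta>)"

definition strat_dist :: "'a set \<Rightarrow> ('a \<Rightarrow> real) \<Rightarrow> ('a \<Rightarrow> real) \<Rightarrow> real" where
  "strat_dist Ai t t' = sqrt (\<Sum>a\<in>Ai. (t a - t' a)\<^sup>2)"

definition nearby_BNE ::
  "nat \<Rightarrow> (nat \<Rightarrow> 'a set) \<Rightarrow> (nat \<Rightarrow> 'a ptype \<Rightarrow> real) \<Rightarrow> (nat \<Rightarrow> 'a ptype \<Rightarrow> real)
    \<Rightarrow> (nat \<Rightarrow> 'a ptype \<Rightarrow> 'a \<Rightarrow> real) \<Rightarrow> real \<Rightarrow> (nat \<Rightarrow> 'a ptype \<Rightarrow> 'a \<Rightarrow> real) set" where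
  "nearby_BNE n A \<mu> \<mu>' s \<eta> = {s' \<in> BNE_set n A \<mu>'.
      \<forall>i<n. \<forall>\<theta>\<in>supp (\<mu> i). strat_dist (A i) (s' i \<theta>) (s i \<theta>) \<le> \<eta>}"

definition configuration ::
  "nat \<Rightarrow> (nat \<Rightarrow> 'a set) \<Rightarrow> (nat \<Rightarrow> 'a ptype \<Rightarrow> real) \<Rightarrow> (nat \<Rightarrow> 'a ptype \<Rightarrow> 'a \<Rightarrow> real) \<Rightarrow> bool" where
  "configuration n A \<mu> s \<longleftrightarrow> population n A \<mu> \<and> s \<in> BNE_set n A \<mu>"

definition stable_config ::
  "nat \<Rightarrow> (nat \<Rightarrow> 'a set) \<Rightarrow> (nat \<Rightarrow> 'a ptype) \<Rightarrow> (nat \<Rightarrow> 'a ptype \<Rightarrow> real)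
    \<Rightarrow> (nat \<Rightarrow> 'a ptype \<Rightarrow> 'a \<Rightarrow> real) \<Rightarrow> bool" where
  "stable_config n A \<pi> \<mu> s \<longleftrightarrow> configuration n A \<mu> s \<and> balanced n A \<pi> \<mu> s \<and>
     (\<forall>J \<theta>m \<eta>. J \<noteq> {} \<and> J \<subseteq> {..<n} \<and> (\<forall>j\<in>J. \<theta>m j \<in> types n A - supp (\<mu> j)) \<and> 0 < \<eta> \<longrightarrow>
        (\<exists>\<eta>b \<epsilon>b. 0 \<le> \<eta>b \<and> \<eta>b < \<eta> \<and> 0 < \<epsilon>b \<and> \<epsilon>b < 1 \<and>
          (\<forall>\<epsilon>. (\<forall>j\<in>J. 0 < \<epsilon> j \<and> \<epsilon> j < 1) \<and> Max (\<epsilon> ` J) < \<epsilon>b \<longrightarrow>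
             (let \<mu>' = post_entry \<mu> J \<theta>m \<epsilon> in
               nearby_BNE n A \<mu> \<mu>' s \<eta>b \<noteq> {} \<and>
               (\<forall>s'\<in>nearby_BNE n A \<mu> \<mu>' s \<eta>b.
                  (\<exists>j\<in>J. \<forall>\<theta>\<in>supp (\<mu> j).
                      avg_fitness n A \<pi> \<mu>' s' j \<theta> > avg_fitness n A \<pi> \<mu>' s' j (\<theta>m j))
                  \<or> balanced n A \<pi> \<mu>' s')))))"

definition stable_no_obs ::
  "nat \<Rightarrow> (nat \<Rightarrow> 'a set) \<Rightarrow> (nat \<Rightarrow> 'a ptype) \<Rightarrow> (nat \<Rightarrow> 'a \<Rightarrow> real) \<Rightarrow> bool" where
  "stable_no_obs n A \<pi> \<sigma> \<longleftrightarrow> (\<exists>\<mu> s. stable_config n A \<pi> \<mu> s \<and> (\<forall>i<n. aggregate \<mu> s i = \<sigma> i))"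

end

theory Submission
  imports Defs "HOL-Analysis.Brouwer_Fixpoint"
begin

text \<open>Each role is populated by a single type whose preferences are the fitness function itself,
  playing \<open>\<sigma>\<^sub>i\<close>. Without observability every player faces only the aggregate play, and the incumbents
  maximise fitness against it, so mutants can at best tie; stability thus reduces to finding, after
  every small entry, an equilibrium of the post-entry game in which the incumbents still play close
  to \<open>\<sigma>\<close>. If \<open>\<sigma>\<close> is strict, incumbents keep playing \<open>\<sigma>\<close>, which remains a best reply nearby, while the
  mutants play an equilibrium of their own game. If \<open>\<sigma>\<close> is completely mixed, incumbents are
  indifferent and can shift their play so that the aggregate stays exactly \<open>\<sigma>\<close>. If \<open>\<sigma>\<close> is the unique
  equilibrium, post-entry equilibria exist by Nash's theorem and converge to \<open>\<sigma>\<close> as the mutant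
  shares vanish. Nash's theorem is obtained from Brouwer's theorem for cubes, proved from Kuhn's
  combinatorial lemma.\<close>

section \<open>Brouwer's fixed point theorem for cubes\<close>

lemma finite_bounded_imp_convergent_subseq:
  fixes X :: "nat \<Rightarrow> 'i \<Rightarrow> real"
  assumes "finite I" and "\<And>k i. i \<in> I \<Longrightarrow> \<bar>X k i\<bar> \<le> B"
  shows "\<exists>r l. strict_mono r \<and> (\<forall>i\<in>I. (\<lambda>k. X (r k) i) \<longlonglongrightarrow> l i)"
  using assms
proof (induction I rule: finite_induct)
  case empty
  show ?case using strict_mono_id[where 'a=nat] by auto
next
  case (insert j I)
  then obtain r l where r: "strict_mono r" "\<forall>i\<in>I. (\<lambda>k. X (r k) i) \<longlonglongrightarrow> l i"
    by auto
  obtain r' where r': "strict_mono r'" "monoseq (\<lambda>k. X (r (r' k)) j)"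
    using seq_monosub[of "\<lambda>k. X (r k) j"] by blast
  have "Bseq (\<lambda>k. X (r (r' k)) j)"
    using insert.prems by (intro BseqI'[of _ B]) simp
  then have "convergent (\<lambda>k. X (r (r' k)) j)"
    using Bseq_monoseq_convergent r'(2) by blast
  then obtain c where c: "(\<lambda>k. X (r (r' k)) j) \<longlonglongrightarrow> c"
    unfolding convergent_def by blast
  have "(\<lambda>k. X (r (r' k)) i) \<longlonglongrightarrow> l i" if "i \<in> I" for i
    using LIMSEQ_subseq_LIMSEQ[OF r(2)[rule_format, OF that] r'(1)] by (simp add: o_def)
  with c have "\<forall>i\<in>insert j I. (\<lambda>k. X ((r \<circ> r') k) i) \<longlonglongrightarrow> (l(j := c)) i"
    using insert.hyps(2) by auto
  then show ?case using strict_mono_o[OF r(1) r'(1)] by blast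
qed

definition cube :: "nat \<Rightarrow> (nat \<Rightarrow> real) set" where
  "cube N = {x. \<forall>i<N. 0 \<le> x i \<and> x i \<le> 1}"

lemma cube_convergent_subseq:
  fixes X :: "nat \<Rightarrow> nat \<Rightarrow> real"
  assumes "\<And>k. X k \<in> cube N"
  obtains r x where "strict_mono r" "x \<in> cube N" "\<And>i. i < N \<Longrightarrow> (\<lambda>k. X (r k) i) \<longlonglongrightarrow> x i"
proof -
  have "\<bar>X k i\<bar> \<le> 1" if "i \<in> {..<N}" for k i
    using assms[of k] that by (auto simp: cube_def)
  then obtain r x where r: "strict_mono r" and lim: "\<forall>i\<in>{..<N}. (\<lambda>k. X (r k) i) \<longlonglongrightarrow> x i"
    using finite_bounded_imp_convergent_subseq[of "{..<N}" X 1] by blast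
  have "x \<in> cube N"
    unfolding cube_def
  proof (intro CollectI allI impI conjI)
    fix i assume "i < N"
    then have "(\<lambda>k. X (r k) i) \<longlonglongrightarrow> x i" "\<And>k. 0 \<le> X (r k) i \<and> X (r k) i \<le> 1"
      using lim assms by (auto simp: cube_def)
    then show "0 \<le> x i" "x i \<le> 1"
      by (auto intro: LIMSEQ_le_const LIMSEQ_le_const2)
  qed
  with r lim show thesis using that by blast
qed

definition seq_continuous_on_cube :: "nat \<Rightarrow> ((nat \<Rightarrow> real) \<Rightarrow> nat \<Rightarrow> real) \<Rightarrow> bool" where
  "seq_continuous_on_cube N f \<longleftrightarrow>
     (\<forall>X x. (\<forall>k. X k \<in> cube N) \<longrightarrow> x \<in> cube N \<longrightarrow> (\<forall>i<N. (\<lambda>k. X k i) \<longlonglongrightarrow> x i) \<longrightarrow>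
        (\<forall>i<N. (\<lambda>k. f (X k) i) \<longlonglongrightarrow> f x i))"

lemma seq_continuous_on_cubeD:
  assumes "seq_continuous_on_cube N f" "\<And>k. X k \<in> cube N" "x \<in> cube N"
    and "\<And>j. j < N \<Longrightarrow> (\<lambda>k. X k j) \<longlonglongrightarrow> x j" and "i < N"
  shows "(\<lambda>k. f (X k) i) \<longlonglongrightarrow> f x i"
  using assms unfolding seq_continuous_on_cube_def by blast

definition grid_point :: "nat \<Rightarrow> (nat \<Rightarrow> nat) \<Rightarrow> nat \<Rightarrow> real" where
  "grid_point p v = (\<lambda>j. real (v j) / real p)"

definition grid_cell :: "nat \<Rightarrow> (nat \<Rightarrow> nat) \<Rightarrow> (nat \<Rightarrow> nat) set" where
  "grid_cell N q = {v. \<forall>j<N. q j \<le> v j \<and> v j \<le> q j + 1}"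

lemma grid_point_in_cube:
  assumes "0 < p" and "\<forall>j<N. v j \<le> p"
  shows "grid_point p v \<in> cube N"
  using assms by (auto simp: cube_def grid_point_def divide_le_eq_1)

text \<open>Kuhn's lemma, with the label of a vertex in coordinate \<open>i\<close> recording on which side of the
  diagonal the \<open>i\<close>-th coordinate of \<open>f\<close> lies, yields a cell of the grid of mesh \<open>1/p\<close> in which
  every coordinate of \<open>f - id\<close> changes sign.\<close>

lemma kuhn_sign_change_cell:
  assumes f: "\<And>x. x \<in> cube N \<Longrightarrow> f x \<in> cube N" and p: "0 < p"
  shows "\<exists>q. (\<forall>i<N. q i < p) \<and> (\<forall>i<N. \<exists>r\<in>grid_cell N q. \<exists>s\<in>grid_cell N q.
           f (grid_point p r) i \<le> grid_point p r i \<and> grid_point p s i \<le> f (grid_point p s) i)"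
proof -
  let ?g = "grid_point p"
  define label where "label v i = (if v i \<noteq> p \<and> ?g v i \<le> f (?g v) i then 0::nat else 1)" for v i
  have label0: "?g v i \<le> f (?g v) i" if "label v i = 0" for v i
    using that by (auto simp: label_def split: if_splits)
  have label1: "f (?g v) i \<le> ?g v i" if "label v i \<noteq> 0" "\<forall>j<N. v j \<le> p" "i < N" for v i
  proof (cases "v i = p")
    case True
    then show ?thesis using f[OF grid_point_in_cube[OF p that(2)]] that(3) p
      by (simp add: cube_def grid_point_def)
  qed (use that in \<open>auto simp: label_def split: if_splits\<close>)
  obtain q where q: "\<forall>i<N. q i < p"
    and cell: "\<forall>i<N. \<exists>r s. (\<forall>j<N. q j \<le> r j \<and> r j \<le> q j + 1) \<and> (\<forall>j<N. q j \<le> s j \<and> s j \<le> q j + 1)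
                  \<and> label r i \<noteq> label s i"
  proof (rule kuhn_lemma[OF p, of N label])
    show "\<forall>v. (\<forall>i<N. v i \<le> p) \<longrightarrow> (\<forall>i<N. v i = 0 \<longrightarrow> label v i = 0)"
      using f[OF grid_point_in_cube[OF p]] p by (auto simp: label_def cube_def grid_point_def)
  qed (auto simp: label_def)
  have in_range: "\<forall>j<N. v j \<le> p" if "v \<in> grid_cell N q" for v
  proof (intro allI impI)
    fix j assume "j < N"
    then have "v j \<le> q j + 1" "q j < p" using that q by (simp_all add: grid_cell_def)
    then show "v j \<le> p" by linarith
  qed
  have "\<exists>r\<in>grid_cell N q. \<exists>s\<in>grid_cell N q. f (?g r) i \<le> ?g r i \<and> ?g s i \<le> f (?g s) i"
    if i: "i < N" for i
  proof -
    obtain r s where "r \<in> grid_cell N q" "s \<in> grid_cell N q" and rs: "label r i \<noteq> label s i"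
      using cell i by (auto simp: grid_cell_def)
    moreover from rs have "label r i = 0 \<and> label s i \<noteq> 0 \<or> label s i = 0 \<and> label r i \<noteq> 0"
      by (auto simp: label_def split: if_splits)
    moreover have "f (?g v) i \<le> ?g v i" if "label v i \<noteq> 0" "v \<in> grid_cell N q" for v
      using label1[OF that(1) in_range[OF that(2)] i] .
    ultimately show ?thesis
      using label0 by blast
  qed
  with q show ?thesis by blast
qed

lemma grid_cell_point_tendsto:
  assumes \<phi>: "strict_mono \<phi>" and j: "j < N"
    and lim: "(\<lambda>k. grid_point (Suc (\<phi> k)) (Q (\<phi> k)) j) \<longlonglongrightarrow> z"
    and V: "\<And>k. V k \<in> grid_cell N (Q k)"
  shows "(\<lambda>k. grid_point (Suc (\<phi> k)) (V (\<phi> k)) j) \<longlonglongrightarrow> z"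
proof -
  have "(\<lambda>k. 1 / real (Suc (\<phi> k))) \<longlonglongrightarrow> 0"
    using LIMSEQ_subseq_LIMSEQ[OF LIMSEQ_Suc[OF lim_1_over_n] \<phi>] by (simp add: o_def)
  have "(\<lambda>k. grid_point (Suc (\<phi> k)) (V (\<phi> k)) j - grid_point (Suc (\<phi> k)) (Q (\<phi> k)) j) \<longlonglongrightarrow> 0"
  proof (rule Lim_null_comparison[OF always_eventually \<open>(\<lambda>k. 1 / real (Suc (\<phi> k))) \<longlonglongrightarrow> 0\<close>], intro allI)
    fix k
    have "Q (\<phi> k) j \<le> V (\<phi> k) j" "V (\<phi> k) j \<le> Q (\<phi> k) j + 1"
      using V[of "\<phi> k"] j by (auto simp: grid_cell_def)
    then have "0 \<le> real (V (\<phi> k) j) - real (Q (\<phi> k) j)" "real (V (\<phi> k) j) - real (Q (\<phi> k) j) \<le> 1"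
      by linarith+
    moreover have "grid_point (Suc (\<phi> k)) (V (\<phi> k)) j - grid_point (Suc (\<phi> k)) (Q (\<phi> k)) j
        = (real (V (\<phi> k) j) - real (Q (\<phi> k) j)) / real (Suc (\<phi> k))"
      by (simp add: grid_point_def diff_divide_distrib)
    ultimately show "norm (grid_point (Suc (\<phi> k)) (V (\<phi> k)) j - grid_point (Suc (\<phi> k)) (Q (\<phi> k)) j)
        \<le> 1 / real (Suc (\<phi> k))"
      by (simp add: divide_right_mono)
  qed
  from tendsto_add[OF this lim] show ?thesis by simp
qed

theorem cube_fixpoint:
  assumes f: "\<And>x. x \<in> cube N \<Longrightarrow> f x \<in> cube N" and cont: "seq_continuous_on_cube N f"
  obtains x where "x \<in> cube N" "\<And>i. i < N \<Longrightarrow> f x i = x i"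
proof -
  let ?g = "\<lambda>k. grid_point (Suc k)"
  have "\<forall>k. \<exists>q. (\<forall>i<N. q i < Suc k) \<and> (\<forall>i<N. \<exists>r\<in>grid_cell N q. \<exists>s\<in>grid_cell N q.
           f (?g k r) i \<le> ?g k r i \<and> ?g k s i \<le> f (?g k s) i)"
    by (intro allI kuhn_sign_change_cell[where f = f, OF f zero_less_Suc])
  then obtain Q where Q: "\<And>k i. i < N \<Longrightarrow> Q k i < Suc k"
    and cells: "\<And>k i. i < N \<Longrightarrow> \<exists>r\<in>grid_cell N (Q k). \<exists>s\<in>grid_cell N (Q k).
           f (?g k r) i \<le> ?g k r i \<and> ?g k s i \<le> f (?g k s) i"
    by metis
  have in_cube: "?g k v \<in> cube N" if "v \<in> grid_cell N (Q k)" for k v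
  proof (rule grid_point_in_cube, simp, intro allI impI)
    fix j assume "j < N"
    then show "v j \<le> Suc k" using that Q[of j k] by (auto simp: grid_cell_def)
  qed
  have "Q k \<in> grid_cell N (Q k)" for k by (simp add: grid_cell_def)
  then obtain \<phi> z where \<phi>: "strict_mono \<phi>" and z: "z \<in> cube N"
    and lim: "\<And>j. j < N \<Longrightarrow> (\<lambda>k. ?g (\<phi> k) (Q (\<phi> k)) j) \<longlonglongrightarrow> z j"
    using cube_convergent_subseq[of "\<lambda>k. ?g k (Q k)"] in_cube by blast
  text \<open>Along the subsequence all vertices of the shrinking cells tend to \<open>z\<close>; the sign changes of
    \<open>f - id\<close> at these vertices pass to the limit.\<close>
  have diff_tendsto: "(\<lambda>k. f (?g (\<phi> k) (V (\<phi> k))) i - ?g (\<phi> k) (V (\<phi> k)) i) \<longlonglongrightarrow> f z i - z i"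
    if V: "\<And>k. V k \<in> grid_cell N (Q k)" and i: "i < N" for V i
  proof -
    have V_lim: "(\<lambda>k. ?g (\<phi> k) (V (\<phi> k)) j) \<longlonglongrightarrow> z j" if "j < N" for j
      using grid_cell_point_tendsto[OF \<phi> that lim[OF that] V] .
    show ?thesis
      using seq_continuous_on_cubeD[OF cont in_cube[OF V] z V_lim i] V_lim[OF i] by (rule tendsto_diff)
  qed
  have "f z i = z i" if i: "i < N" for i
  proof -
    obtain R S where R: "\<And>k. R k \<in> grid_cell N (Q k)" and S: "\<And>k. S k \<in> grid_cell N (Q k)"
      and sign: "\<And>k. f (?g k (R k)) i \<le> ?g k (R k) i" "\<And>k. ?g k (S k) i \<le> f (?g k (S k)) i"
      using cells[OF i] by metis
    have "f z i - z i \<le> 0"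
      by (rule LIMSEQ_le_const2[OF diff_tendsto[OF R i]]) (use sign in simp)
    moreover have "0 \<le> f z i - z i"
      by (rule LIMSEQ_le_const[OF diff_tendsto[OF S i]]) (use sign in simp)
    ultimately show ?thesis by simp
  qed
  with z that show thesis by blast
qed

section \<open>Existence of Nash equilibria\<close>

definition pure :: "'b \<Rightarrow> 'b \<Rightarrow> real" where
  "pure b = (\<lambda>c. if c = b then 1 else 0)"

lemma mixed_strategy_pure: "finite B \<Longrightarrow> b \<in> B \<Longrightarrow> mixed_strategy B (pure b)"
  by (auto simp: mixed_strategy_def pure_def)

lemma mixed_strategy_bounds:
  assumes "mixed_strategy B t" and "finite B"
  shows "0 \<le> t b" and "t b \<le> 1"
proof -
  show "0 \<le> t b" using assms(1) by (cases "b \<in> B") (auto simp: mixed_strategy_def)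
  have "t b \<le> 1" if "b \<in> B"
    using member_le_sum[of b B t] assms that by (auto simp: mixed_strategy_def)
  then show "t b \<le> 1" using assms(1) by (cases "b \<in> B") (auto simp: mixed_strategy_def)
qed

lemma mixed_strategy_sum_mult_const:
  "mixed_strategy B t \<Longrightarrow> (\<Sum>b\<in>B. t b * c) = c"
  by (simp add: mixed_strategy_def flip: sum_distrib_right)

lemma mixed_strategy_average_le:
  assumes "mixed_strategy B t" and "\<And>b. b \<in> B \<Longrightarrow> w b \<le> v"
  shows "(\<Sum>b\<in>B. t b * w b) \<le> v"
proof -
  have "(\<Sum>b\<in>B. t b * w b) \<le> (\<Sum>b\<in>B. t b * v)"
    using assms by (intro sum_mono mult_left_mono) (auto simp: mixed_strategy_def)
  then show ?thesis using mixed_strategy_sum_mult_const[OF assms(1)] by simp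
qed

lemma mixed_strategy_support_le_average:
  assumes "mixed_strategy B t" and "finite B"
  shows "\<exists>b\<in>B. 0 < t b \<and> w b \<le> (\<Sum>c\<in>B. t c * w c)"
proof (rule ccontr)
  let ?v = "\<Sum>c\<in>B. t c * w c"
  assume "\<not> ?thesis"
  then have above: "?v < w b" if "b \<in> B" "0 < t b" for b
    using that by force
  have nonneg: "0 \<le> t b" if "b \<in> B" for b
    using assms(1) that by (simp add: mixed_strategy_def)
  have "\<exists>b\<in>B. t b \<noteq> 0"
  proof (rule ccontr)
    assume "\<not> ?thesis"
    then have "sum t B = 0" by simp
    then show False using assms(1) by (simp add: mixed_strategy_def)
  qed
  then obtain b0 where "b0 \<in> B" "0 < t b0"
    using nonneg by (auto simp: less_le)
  moreover have "t b * ?v \<le> t b * w b" if "b \<in> B" for b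
    using above[OF that] nonneg[OF that] by (cases "t b = 0") (auto simp: less_le)
  ultimately have "(\<Sum>b\<in>B. t b * ?v) < (\<Sum>b\<in>B. t b * w b)"
    using above by (intro sum_strict_mono_ex1[OF assms(2)]) (auto intro!: bexI[of _ b0])
  then show False using mixed_strategy_sum_mult_const[OF assms(1)] by simp
qed

definition strategy_profile :: "'k set \<Rightarrow> ('k \<Rightarrow> 'b set) \<Rightarrow> ('k \<Rightarrow> 'b \<Rightarrow> real) \<Rightarrow> bool" where
  "strategy_profile K B P \<longleftrightarrow> (\<forall>k\<in>K. mixed_strategy (B k) (P k)) \<and> (\<forall>k. k \<notin> K \<longrightarrow> P k = (\<lambda>b. 0))"

lemma strategy_profileD: "strategy_profile K B P \<Longrightarrow> k \<in> K \<Longrightarrow> mixed_strategy (B k) (P k)"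
  by (simp add: strategy_profile_def)

lemma strategy_profile_upd:
  "strategy_profile K B P \<Longrightarrow> k \<in> K \<Longrightarrow> mixed_strategy (B k) t \<Longrightarrow> strategy_profile K B (P(k := t))"
  by (auto simp: strategy_profile_def)

locale profile_coding =
  fixes K :: "'k set" and B :: "'k \<Rightarrow> 'b set" and N :: nat and e :: "nat \<Rightarrow> 'k \<times> 'b"
  assumes finite_B: "\<And>k. k \<in> K \<Longrightarrow> finite (B k)"
    and nonempty_B: "\<And>k. k \<in> K \<Longrightarrow> B k \<noteq> {}"
    and bij: "bij_betw e {..<N} (Sigma K B)"
begin

definition index :: "'k \<Rightarrow> 'b \<Rightarrow> nat" where
  "index k b = inv_into {..<N} e (k, b)"

lemma index: "k \<in> K \<Longrightarrow> b \<in> B k \<Longrightarrow> index k b < N \<and> e (index k b) = (k, b)"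
  using bij unfolding index_def bij_betw_def
  by (metis SigmaI f_inv_into_f inv_into_into lessThan_iff)

lemma e_in: "i < N \<Longrightarrow> fst (e i) \<in> K \<and> snd (e i) \<in> B (fst (e i))"
  using bij unfolding bij_betw_def by (metis SigmaE image_eqI lessThan_iff prod.sel)

definition encode :: "('k \<Rightarrow> 'b \<Rightarrow> real) \<Rightarrow> nat \<Rightarrow> real" where
  "encode P i = P (fst (e i)) (snd (e i))"

definition mass :: "(nat \<Rightarrow> real) \<Rightarrow> 'k \<Rightarrow> real" where
  "mass x k = (\<Sum>c\<in>B k. x (index k c))"

text \<open>A continuous retraction of the cube onto the strategy profiles: a deficit of total mass
  is spread uniformly, an excess is scaled away.\<close>

definition decode :: "(nat \<Rightarrow> real) \<Rightarrow> 'k \<Rightarrow> 'b \<Rightarrow> real" where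
  "decode x k b = (if k \<in> K \<and> b \<in> B k
     then (x (index k b) + max 0 (1 - mass x k) / real (card (B k))) / max 1 (mass x k) else 0)"

lemma encode_in_cube: "strategy_profile K B P \<Longrightarrow> encode P \<in> cube N"
  using e_in finite_B mixed_strategy_bounds by (fastforce simp: cube_def encode_def strategy_profile_def)

lemma decode_profile:
  assumes x: "x \<in> cube N"
  shows "strategy_profile K B (decode x)"
  unfolding strategy_profile_def
proof (intro conjI ballI allI impI)
  fix k assume k: "k \<in> K"
  have card: "0 < card (B k)" using finite_B[OF k] nonempty_B[OF k] by (simp add: card_gt_0_iff)
  have x_nonneg: "0 \<le> x (index k b)" if "b \<in> B k" for b
    using x index[OF k that] by (simp add: cube_def)
  then have "0 \<le> mass x k" by (simp add: mass_def sum_nonneg)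
  have "(\<Sum>b\<in>B k. decode x k b)
      = (\<Sum>b\<in>B k. x (index k b) + max 0 (1 - mass x k) / real (card (B k))) / max 1 (mass x k)"
    using k by (simp add: decode_def sum_divide_distrib)
  also have "\<dots> = (mass x k + max 0 (1 - mass x k)) / max 1 (mass x k)"
    using card by (simp add: sum.distrib mass_def)
  also have "\<dots> = 1" by (simp add: max_def)
  finally show "mixed_strategy (B k) (decode x k)"
    using k x_nonneg by (auto simp: mixed_strategy_def decode_def)
qed (simp add: decode_def fun_eq_iff)

lemma decode_encode:
  assumes P: "strategy_profile K B P"
  shows "decode (encode P) = P"
proof (intro ext)
  fix k b
  show "decode (encode P) k b = P k b"
  proof (cases "k \<in> K \<and> b \<in> B k")
    case True
    then have "encode P (index k c) = P k c" if "c \<in> B k" for c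
      using index[OF _ that] by (simp add: encode_def)
    then have "mass (encode P) k = 1"
      using P True by (simp add: mass_def strategy_profile_def mixed_strategy_def)
    then show ?thesis using True index by (simp add: decode_def encode_def)
  next
    case False
    then show ?thesis using P by (auto simp: decode_def strategy_profile_def mixed_strategy_def)
  qed
qed

lemma decode_cong: "(\<And>i. i < N \<Longrightarrow> x i = y i) \<Longrightarrow> decode x = decode y"
  using index by (auto simp: decode_def mass_def fun_eq_iff intro!: sum.cong)

lemma decode_tendsto:
  assumes "\<And>i. i < N \<Longrightarrow> (\<lambda>m. X m i) \<longlonglongrightarrow> x i" and "k \<in> K" "b \<in> B k"
  shows "(\<lambda>m. decode (X m) k b) \<longlonglongrightarrow> decode x k b"
proof -
  have "(\<lambda>m. X m (index k c)) \<longlonglongrightarrow> x (index k c)" if "c \<in> B k" for c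
    using assms(1) index[OF assms(2) that] by blast
  then have "(\<lambda>m. mass (X m) k) \<longlonglongrightarrow> mass x k"
    unfolding mass_def by (rule tendsto_sum)
  moreover have "card (B k) \<noteq> 0"
    using finite_B[OF assms(2)] nonempty_B[OF assms(2)] by simp
  ultimately show ?thesis
    unfolding decode_def using assms index[OF assms(2,3)]
    by (auto intro!: tendsto_divide tendsto_add tendsto_max tendsto_diff)
qed

end

theorem strategy_profile_fixpoint:
  assumes "finite K" and finite_B: "\<And>k. k \<in> K \<Longrightarrow> finite (B k)" and nonempty_B: "\<And>k. k \<in> K \<Longrightarrow> B k \<noteq> {}"
    and T: "\<And>P. strategy_profile K B P \<Longrightarrow> strategy_profile K B (T P)"
    and cont: "\<And>Ps P k b. (\<And>m. strategy_profile K B (Ps m)) \<Longrightarrow> strategy_profile K B P \<Longrightarrow>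
      (\<And>k b. k \<in> K \<Longrightarrow> b \<in> B k \<Longrightarrow> (\<lambda>m. Ps m k b) \<longlonglongrightarrow> P k b) \<Longrightarrow> k \<in> K \<Longrightarrow> b \<in> B k \<Longrightarrow>
      (\<lambda>m. T (Ps m) k b) \<longlonglongrightarrow> T P k b"
  obtains P where "strategy_profile K B P" "T P = P"
proof -
  have "finite (Sigma K B)" using assms(1) finite_B by blast
  then obtain e where "bij_betw e {..<card (Sigma K B)} (Sigma K B)"
    using ex_bij_betw_nat_finite lessThan_atLeast0 by metis
  then interpret profile_coding K B "card (Sigma K B)" e
    using finite_B nonempty_B by unfold_locales
  let ?N = "card (Sigma K B)"
  let ?f = "\<lambda>x. encode (T (decode x))"
  have maps: "?f x \<in> cube ?N" if "x \<in> cube ?N" for x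
    by (intro encode_in_cube T decode_profile that)
  have cont_f: "seq_continuous_on_cube ?N ?f"
    unfolding seq_continuous_on_cube_def
  proof (intro allI impI)
    fix X x i assume X: "\<forall>m. X m \<in> cube ?N" and x: "x \<in> cube ?N"
      and lim: "\<forall>i<?N. (\<lambda>m. X m i) \<longlonglongrightarrow> x i" and i: "i < ?N"
    show "(\<lambda>m. ?f (X m) i) \<longlonglongrightarrow> ?f x i"
      unfolding encode_def
      by (rule cont) (use X x lim e_in[OF i] in \<open>auto intro: decode_profile decode_tendsto\<close>)
  qed
  obtain x where x: "x \<in> cube ?N" and fixed: "\<And>i. i < ?N \<Longrightarrow> ?f x i = x i"
    using cube_fixpoint[OF maps cont_f] by auto
  have "decode x = decode (encode (T (decode x)))"
    by (rule decode_cong[OF fixed, symmetric])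
  also have "\<dots> = T (decode x)"
    by (rule decode_encode[OF T[OF decode_profile[OF x]]])
  finally show thesis
    using decode_profile[OF x] that by simp
qed

definition pure_gain :: "('k \<Rightarrow> ('k \<Rightarrow> 'b \<Rightarrow> real) \<Rightarrow> real) \<Rightarrow> ('k \<Rightarrow> 'b \<Rightarrow> real) \<Rightarrow> 'k \<Rightarrow> 'b \<Rightarrow> real" where
  "pure_gain u P k b = max 0 (u k (P(k := pure b)) - u k P)"

definition nash_map ::
  "'k set \<Rightarrow> ('k \<Rightarrow> 'b set) \<Rightarrow> ('k \<Rightarrow> ('k \<Rightarrow> 'b \<Rightarrow> real) \<Rightarrow> real) \<Rightarrow> ('k \<Rightarrow> 'b \<Rightarrow> real) \<Rightarrow> 'k \<Rightarrow> 'b \<Rightarrow> real"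
where
  "nash_map K B u P k b = (if k \<in> K \<and> b \<in> B k
     then (P k b + pure_gain u P k b) / (1 + (\<Sum>c\<in>B k. pure_gain u P k c)) else 0)"

lemma pure_gain_nonneg: "0 \<le> pure_gain u P k b"
  by (simp add: pure_gain_def)

lemma nash_map_profile:
  assumes "strategy_profile K B P"
  shows "strategy_profile K B (nash_map K B u P)"
  unfolding strategy_profile_def
proof (intro conjI ballI allI impI)
  fix k assume k: "k \<in> K"
  have P: "mixed_strategy (B k) (P k)" using assms k by (simp add: strategy_profile_def)
  have G: "0 \<le> (\<Sum>c\<in>B k. pure_gain u P k c)" by (simp add: pure_gain_nonneg sum_nonneg)
  have "(\<Sum>b\<in>B k. nash_map K B u P k b)
      = (\<Sum>b\<in>B k. P k b + pure_gain u P k b) / (1 + (\<Sum>c\<in>B k. pure_gain u P k c))"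
    using k by (simp add: nash_map_def sum_divide_distrib)
  also have "\<dots> = 1" using P G by (simp add: sum.distrib mixed_strategy_def)
  finally show "mixed_strategy (B k) (nash_map K B u P k)"
    using P G pure_gain_nonneg[of u P k] k by (auto simp: mixed_strategy_def nash_map_def)
qed (simp add: nash_map_def fun_eq_iff)

text \<open>At a fixed point some action used with positive probability is no better than the
  current payoff, so it gains nothing; the fixed point equation then forces all gains to vanish.\<close>

lemma nash_map_fixpoint_best_reply:
  assumes fin: "finite (B k)" and k: "k \<in> K" and P: "strategy_profile K B P"
    and lin: "\<And>t. mixed_strategy (B k) t \<Longrightarrow> u k (P(k := t)) = (\<Sum>b\<in>B k. t b * u k (P(k := pure b)))"
    and fixed: "nash_map K B u P = P" and t: "mixed_strategy (B k) t"
  shows "u k (P(k := t)) \<le> u k P"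
proof -
  define w where "w b = u k (P(k := pure b))" for b
  have Pk: "mixed_strategy (B k) (P k)" using P k by (simp add: strategy_profile_def)
  have v: "u k P = (\<Sum>b\<in>B k. P k b * w b)" using lin[OF Pk] by (simp add: w_def)
  obtain b where b: "b \<in> B k" "0 < P k b" "w b \<le> u k P"
    using mixed_strategy_support_le_average[OF Pk fin, of w] v by auto
  let ?G = "\<Sum>c\<in>B k. pure_gain u P k c"
  have G: "0 \<le> ?G" by (simp add: pure_gain_nonneg sum_nonneg)
  have "pure_gain u P k b = 0" using b(3) by (simp add: pure_gain_def w_def)
  then have "P k b / (1 + ?G) = nash_map K B u P k b" using k b(1) by (simp add: nash_map_def)
  also have "\<dots> = P k b" by (simp only: fixed)
  finally have eq: "P k b / (1 + ?G) = P k b" .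
  have "\<not> 0 < ?G"
  proof
    assume "0 < ?G"
    then have "P k b / (1 + ?G) < P k b" using b(2) by (simp add: divide_less_eq)
    then show False by (simp only: eq less_irrefl)
  qed
  with G have "?G = 0" by simp
  then have "pure_gain u P k c = 0" if "c \<in> B k" for c
    using that by (simp add: sum_nonneg_eq_0_iff[OF fin] pure_gain_nonneg)
  then have "max 0 (w c - u k P) = 0" if "c \<in> B k" for c
    using that by (simp add: pure_gain_def w_def)
  then have "w c \<le> u k P" if "c \<in> B k" for c
    using that by (fastforce simp: max_def split: if_splits)
  then show ?thesis
    unfolding lin[OF t] w_def[symmetric] by (rule mixed_strategy_average_le[OF t])
qed

lemma nash_map_tendsto:
  assumes prof: "\<And>m. strategy_profile K B (Ps m)" "strategy_profile K B P"
    and lim: "\<And>k b. k \<in> K \<Longrightarrow> b \<in> B k \<Longrightarrow> (\<lambda>m. Ps m k b) \<longlonglongrightarrow> P k b"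
    and cont: "\<And>Qs Q k. (\<And>m. strategy_profile K B (Qs m)) \<Longrightarrow> strategy_profile K B Q \<Longrightarrow>
      (\<And>k b. k \<in> K \<Longrightarrow> b \<in> B k \<Longrightarrow> (\<lambda>m. Qs m k b) \<longlonglongrightarrow> Q k b) \<Longrightarrow> k \<in> K \<Longrightarrow>
      (\<lambda>m. u k (Qs m)) \<longlonglongrightarrow> u k Q"
    and finite_B: "\<And>k. k \<in> K \<Longrightarrow> finite (B k)" and k: "k \<in> K" and b: "b \<in> B k"
  shows "(\<lambda>m. nash_map K B u (Ps m) k b) \<longlonglongrightarrow> nash_map K B u P k b"
proof -
  have gain: "(\<lambda>m. pure_gain u (Ps m) k c) \<longlonglongrightarrow> pure_gain u P k c" if c: "c \<in> B k" for c
  proof -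
    have pc: "mixed_strategy (B k) (pure c)" by (rule mixed_strategy_pure[OF finite_B[OF k] c])
    have "(\<lambda>m. u k ((Ps m)(k := pure c))) \<longlonglongrightarrow> u k (P(k := pure c))"
      by (rule cont) (use strategy_profile_upd[OF prof(1) k pc] strategy_profile_upd[OF prof(2) k pc] lim k in auto)
    moreover have "(\<lambda>m. u k (Ps m)) \<longlonglongrightarrow> u k P"
      by (rule cont[OF prof lim k])
    ultimately show ?thesis
      unfolding pure_gain_def by (intro tendsto_intros)
  qed
  have "0 \<le> (\<Sum>c\<in>B k. pure_gain u P k c)" by (simp add: pure_gain_nonneg sum_nonneg)
  then show ?thesis
    unfolding nash_map_def using k b lim gain by (auto intro!: tendsto_divide tendsto_add tendsto_sum)
qed

theorem nash_equilibrium_exists: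
  assumes "finite K" and finite_B: "\<And>k. k \<in> K \<Longrightarrow> finite (B k)" and nonempty_B: "\<And>k. k \<in> K \<Longrightarrow> B k \<noteq> {}"
    and lin: "\<And>P k t. strategy_profile K B P \<Longrightarrow> k \<in> K \<Longrightarrow> mixed_strategy (B k) t \<Longrightarrow>
      u k (P(k := t)) = (\<Sum>b\<in>B k. t b * u k (P(k := pure b)))"
    and cont: "\<And>Ps P k. (\<And>m. strategy_profile K B (Ps m)) \<Longrightarrow> strategy_profile K B P \<Longrightarrow>
      (\<And>k b. k \<in> K \<Longrightarrow> b \<in> B k \<Longrightarrow> (\<lambda>m. Ps m k b) \<longlonglongrightarrow> P k b) \<Longrightarrow> k \<in> K \<Longrightarrow>
      (\<lambda>m. u k (Ps m)) \<longlonglongrightarrow> u k P"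
  obtains P where "strategy_profile K B P"
    and "\<And>k t. k \<in> K \<Longrightarrow> mixed_strategy (B k) t \<Longrightarrow> u k (P(k := t)) \<le> u k P"
proof -
  obtain P where P: "strategy_profile K B P" and fixed: "nash_map K B u P = P"
  proof (rule strategy_profile_fixpoint[OF assms(1) finite_B nonempty_B])
    show "strategy_profile K B (nash_map K B u P)" if "strategy_profile K B P" for P
      using nash_map_profile[OF that] .
    show "(\<lambda>m. nash_map K B u (Ps m) k b) \<longlonglongrightarrow> nash_map K B u P k b"
      if "\<And>m. strategy_profile K B (Ps m)" "strategy_profile K B P"
        "\<And>k b. k \<in> K \<Longrightarrow> b \<in> B k \<Longrightarrow> (\<lambda>m. Ps m k b) \<longlonglongrightarrow> P k b" "k \<in> K" "b \<in> B k"
      for Ps P k b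
      by (rule nash_map_tendsto[OF that(1-3) cont finite_B that(4,5)])
  qed
  show thesis
    using that[OF P] nash_map_fixpoint_best_reply[OF finite_B _ P lin[OF P] fixed] by blast
qed

section \<open>Multilinear payoffs and best replies\<close>

lemma prod_fun_upd_split:
  fixes i n :: nat
  assumes "i < n"
  shows "(\<Prod>j<n. (x(i := y)) j (a j)) = y (a i) * (\<Prod>j\<in>{..<n} - {i}. x j (a j))"
proof -
  have "(\<Prod>j<n. (x(i := y)) j (a j)) = y (a i) * (\<Prod>j\<in>{..<n} - {i}. (x(i := y)) j (a j))"
    using assms by (subst prod.remove[of _ i]) auto
  also have "(\<Prod>j\<in>{..<n} - {i}. (x(i := y)) j (a j)) = (\<Prod>j\<in>{..<n} - {i}. x j (a j))"
    by (intro prod.cong) auto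
  finally show ?thesis .
qed

lemma mlext_fun_upd_linear:
  assumes "i < n" and "finite (A i)"
  shows "mlext n A \<theta> (x(i := t)) = (\<Sum>b\<in>A i. t b * mlext n A \<theta> (x(i := pure b)))"
proof -
  define R where "R a = (\<Prod>j\<in>{..<n} - {i}. x j (a j)) * \<theta> a" for a
  have L: "mlext n A \<theta> (x(i := y)) = (\<Sum>a\<in>PiE {..<n} A. y (a i) * R a)" for y
    unfolding mlext_def R_def prod_fun_upd_split[OF assms(1)] by (simp add: mult.assoc)
  have "(\<Sum>b\<in>A i. t b * mlext n A \<theta> (x(i := pure b)))
      = (\<Sum>a\<in>PiE {..<n} A. \<Sum>b\<in>A i. t b * (pure b (a i) * R a))"
    unfolding L by (simp add: sum_distrib_left sum.swap[of _ "A i"])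
  also have "\<dots> = (\<Sum>a\<in>PiE {..<n} A. t (a i) * R a)"
  proof (intro sum.cong refl)
    fix a assume "a \<in> PiE {..<n} A"
    then have "a i \<in> A i" using assms(1) by auto
    have "(\<Sum>b\<in>A i. t b * (pure b (a i) * R a)) = (\<Sum>b\<in>A i. if a i = b then t b * R a else 0)"
      by (intro sum.cong) (auto simp: pure_def)
    then show "(\<Sum>b\<in>A i. t b * (pure b (a i) * R a)) = t (a i) * R a"
      using assms(2) \<open>a i \<in> A i\<close> by simp
  qed
  finally show ?thesis using L by simp
qed

lemma mlext_tendsto:
  assumes "\<And>j a. j < n \<Longrightarrow> a \<in> A j \<Longrightarrow> (\<lambda>k. X k j a) \<longlonglongrightarrow> x j a"
  shows "(\<lambda>k. mlext n A \<theta> (X k)) \<longlonglongrightarrow> mlext n A \<theta> x"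
  unfolding mlext_def using assms by (auto intro!: tendsto_sum tendsto_mult tendsto_prod)

definition near :: "nat \<Rightarrow> (nat \<Rightarrow> 'a set) \<Rightarrow> (nat \<Rightarrow> 'a \<Rightarrow> real) \<Rightarrow> (nat \<Rightarrow> 'a \<Rightarrow> real) \<Rightarrow> real \<Rightarrow> bool" where
  "near n A x y d \<longleftrightarrow> (\<forall>j<n. \<forall>a\<in>A j. \<bar>x j a - y j a\<bar> < d)"

lemma near_mono: "near n A x y d \<Longrightarrow> d \<le> d' \<Longrightarrow> near n A x y d'"
  by (fastforce simp: near_def)

lemma near_fun_upd: "near n A x y d \<Longrightarrow> 0 < d \<Longrightarrow> near n A (x(i := t)) (y(i := t)) d"
  by (simp add: near_def)

lemma finite_common_radius:
  assumes "finite S" and "\<And>s. s \<in> S \<Longrightarrow> \<exists>d>0. \<forall>x. near n A x y d \<longrightarrow> P s x"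
  shows "\<exists>d>0. \<forall>x. near n A x y d \<longrightarrow> (\<forall>s\<in>S. P s x)"
proof -
  obtain D where D: "\<And>s. s \<in> S \<Longrightarrow> 0 < D s \<and> (\<forall>x. near n A x y (D s) \<longrightarrow> P s x)"
    using assms(2) by metis
  define d where "d = Min (insert 1 (D ` S))"
  have "0 < d" using assms(1) D by (simp add: d_def)
  moreover have "d \<le> D s" if "s \<in> S" for s using assms(1) that by (simp add: d_def)
  ultimately show ?thesis using D near_mono by blast
qed

lemma mlext_continuous_at:
  assumes "0 < e"
  shows "\<exists>d>0. \<forall>x. near n A x y d \<longrightarrow> \<bar>mlext n A \<theta> x - mlext n A \<theta> y\<bar> < e"
proof (rule ccontr)
  assume "\<not> ?thesis"
  then have ex: "\<forall>k. \<exists>x. near n A x y (1 / Suc k) \<and> \<not> \<bar>mlext n A \<theta> x - mlext n A \<theta> y\<bar> < e"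
    by (metis of_nat_0_less_iff zero_less_Suc zero_less_divide_1_iff)
  obtain X where X: "\<And>k. near n A (X k) y (1 / Suc k)"
    and far: "\<And>k. \<not> \<bar>mlext n A \<theta> (X k) - mlext n A \<theta> y\<bar> < e"
    using choice[OF ex] by blast
  have "(\<lambda>k. X k j a) \<longlonglongrightarrow> y j a" if "j < n" "a \<in> A j" for j a
  proof -
    have "(\<lambda>k. X k j a - y j a) \<longlonglongrightarrow> 0"
      by (rule Lim_null_comparison[OF always_eventually LIMSEQ_Suc[OF lim_1_over_n]])
        (use X that in \<open>auto simp: near_def intro: less_imp_le\<close>)
    then show ?thesis by (simp add: LIM_zero_iff)
  qed
  then have "(\<lambda>k. mlext n A \<theta> (X k) - mlext n A \<theta> y) \<longlonglongrightarrow> 0"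
    by (simp add: LIM_zero mlext_tendsto)
  from order_tendstoD(2)[OF tendsto_rabs_zero[OF this] assms] obtain k
    where "\<bar>mlext n A \<theta> (X k) - mlext n A \<theta> y\<bar> < e"
    by (auto simp: eventually_sequentially)
  with far show False by blast
qed

lemma exp_util_eq_mlext_aggregate:
  assumes i: "i < n" and fin: "\<And>j. j < n \<Longrightarrow> finite (supp (\<mu> j))"
  shows "exp_util n A \<mu> s i \<theta> t = mlext n A \<theta> ((aggregate \<mu> s)(i := t))"
proof -
  define S where "S = {..<n} - {i}"
  have "exp_util n A \<mu> s i \<theta> t =
     (\<Sum>\<theta>'\<in>PiE S (\<lambda>j. supp (\<mu> j)). \<Sum>a\<in>PiE {..<n} A.
        (\<Prod>j\<in>S. \<mu> j (\<theta>' j)) * (t (a i) * (\<Prod>j\<in>S. s j (\<theta>' j) (a j)) * \<theta> a))"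
    unfolding exp_util_def mlext_def S_def prod_fun_upd_split[OF i]
    by (simp add: sum_distrib_left)
  also have "\<dots> = (\<Sum>a\<in>PiE {..<n} A. \<Sum>\<theta>'\<in>PiE S (\<lambda>j. supp (\<mu> j)).
        (t (a i) * \<theta> a) * (\<Prod>j\<in>S. \<mu> j (\<theta>' j) * s j (\<theta>' j) (a j)))"
    by (subst sum.swap) (simp add: prod.distrib mult_ac)
  also have "\<dots> = (\<Sum>a\<in>PiE {..<n} A. (t (a i) * \<theta> a) * (\<Prod>j\<in>S. \<Sum>c\<in>supp (\<mu> j). \<mu> j c * s j c (a j)))"
  proof -
    have "(\<Prod>j\<in>S. \<Sum>c\<in>supp (\<mu> j). \<mu> j c * s j c (a j))
        = (\<Sum>\<theta>'\<in>PiE S (\<lambda>j. supp (\<mu> j)). \<Prod>j\<in>S. \<mu> j (\<theta>' j) * s j (\<theta>' j) (a j))" for a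
      using fin by (intro prod_sum_PiE) (auto simp: S_def)
    then show ?thesis by (simp add: sum_distrib_left)
  qed
  also have "\<dots> = mlext n A \<theta> ((aggregate \<mu> s)(i := t))"
    unfolding mlext_def prod_fun_upd_split[OF i] S_def[symmetric]
    by (simp add: aggregate_def mult_ac)
  finally show ?thesis .
qed

definition best_reply ::
  "nat \<Rightarrow> (nat \<Rightarrow> 'a set) \<Rightarrow> 'a ptype \<Rightarrow> (nat \<Rightarrow> 'a \<Rightarrow> real) \<Rightarrow> nat \<Rightarrow> ('a \<Rightarrow> real) \<Rightarrow> bool" where
  "best_reply n A \<theta> x i t \<longleftrightarrow> mixed_strategy (A i) t \<and>
     (\<forall>t'. mixed_strategy (A i) t' \<longrightarrow> mlext n A \<theta> (x(i := t')) \<le> mlext n A \<theta> (x(i := t)))"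

lemma best_replyI_pure:
  assumes "i < n" "finite (A i)" "mixed_strategy (A i) t"
    and "\<And>b. b \<in> A i \<Longrightarrow> mlext n A \<theta> (x(i := pure b)) \<le> mlext n A \<theta> (x(i := t))"
  shows "best_reply n A \<theta> x i t"
  unfolding best_reply_def
proof (intro conjI allI impI assms(3))
  fix t' assume "mixed_strategy (A i) t'"
  then have "(\<Sum>b\<in>A i. t' b * mlext n A \<theta> (x(i := pure b))) \<le> mlext n A \<theta> (x(i := t))"
    using assms(4) by (rule mixed_strategy_average_le)
  then show "mlext n A \<theta> (x(i := t')) \<le> mlext n A \<theta> (x(i := t))"
    by (simp only: mlext_fun_upd_linear[where A = A, OF assms(1,2), of \<theta> x t'])
qed

lemma exists_pure_best_reply:
  assumes "i < n" "finite (A i)" "A i \<noteq> {}"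
  obtains b where "b \<in> A i" "best_reply n A \<theta> x i (pure b)"
proof -
  define w where "w c = mlext n A \<theta> (x(i := pure c))" for c
  have "Max (w ` A i) \<in> w ` A i" using assms(2,3) by simp
  then obtain b where b: "b \<in> A i" "w b = Max (w ` A i)" by auto
  have "w c \<le> w b" if "c \<in> A i" for c using b(2) assms(2) that by simp
  then have "best_reply n A \<theta> x i (pure b)"
    by (intro best_replyI_pure[where A = A, OF assms(1,2) mixed_strategy_pure[OF assms(2) b(1)]]) (simp add: w_def)
  with b(1) show thesis by (rule that)
qed

lemma exists_pure_best_replies:
  assumes "\<And>i. i < n \<Longrightarrow> finite (A i)" "\<And>i. i < n \<Longrightarrow> A i \<noteq> {}" and "J \<subseteq> {..<n}"
  obtains b where "\<And>j. j \<in> J \<Longrightarrow> b j \<in> A j \<and> best_reply n A (\<theta>m j) x j (pure (b j))"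
proof -
  have "\<exists>b. b \<in> A j \<and> best_reply n A (\<theta>m j) x j (pure b)" if "j \<in> J" for j
  proof -
    have j: "j < n" using that assms(3) by auto
    show ?thesis
      using exists_pure_best_reply[where A = A and \<theta> = "\<theta>m j" and x = x, OF j assms(1,2)[OF j]] by blast
  qed
  then show thesis using that by metis
qed

lemma nash_eq_iff_best_reply:
  "nash_eq n A \<pi> \<sigma> \<longleftrightarrow> mixed_profile n A \<sigma> \<and> (\<forall>i<n. best_reply n A (\<pi> i) \<sigma> i (\<sigma> i))"
  by (auto simp: nash_eq_def best_reply_def mixed_profile_def)

section \<open>The game after entry\<close>

definition entry_aggregate ::
  "nat set \<Rightarrow> (nat \<Rightarrow> real) \<Rightarrow> (nat \<Rightarrow> 'a \<Rightarrow> real) \<Rightarrow> (nat \<Rightarrow> 'a \<Rightarrow> real) \<Rightarrow> nat \<Rightarrow> 'a \<Rightarrow> real" where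
  "entry_aggregate J \<epsilon> r m i = (if i \<in> J then (\<lambda>a. (1 - \<epsilon> i) * r i a + \<epsilon> i * m i a) else r i)"

lemma entry_aggregate_upd_residents [simp]:
  "(entry_aggregate J \<epsilon> (r(i := y)) m)(i := t) = (entry_aggregate J \<epsilon> r m)(i := t)"
  by (auto simp: entry_aggregate_def)

lemma entry_aggregate_upd_mutants [simp]:
  "(entry_aggregate J \<epsilon> r (m(i := y)))(i := t) = (entry_aggregate J \<epsilon> r m)(i := t)"
  by (auto simp: entry_aggregate_def)

definition post_entry_eq ::
  "nat \<Rightarrow> (nat \<Rightarrow> 'a set) \<Rightarrow> (nat \<Rightarrow> 'a ptype) \<Rightarrow> nat set \<Rightarrow> (nat \<Rightarrow> 'a ptype) \<Rightarrow> (nat \<Rightarrow> real)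
    \<Rightarrow> (nat \<Rightarrow> 'a \<Rightarrow> real) \<Rightarrow> (nat \<Rightarrow> 'a \<Rightarrow> real) \<Rightarrow> bool" where
  "post_entry_eq n A \<pi> J \<theta>m \<epsilon> r m \<longleftrightarrow>
     (\<forall>i<n. best_reply n A (\<pi> i) (entry_aggregate J \<epsilon> r m) i (r i)) \<and>
     (\<forall>j\<in>J. best_reply n A (\<theta>m j) (entry_aggregate J \<epsilon> r m) j (m j))"

text \<open>The game played after entry when only the residents in \<open>KR\<close> adapt, the other residents being
  frozen at \<open>r0\<close>: the players are \<open>Inl i\<close> (resident of role \<open>i \<in> KR\<close>) and \<open>Inr j\<close> (mutant of
  role \<open>j \<in> J\<close>).\<close>

locale partial_entry_game =
  fixes n :: nat and A :: "nat \<Rightarrow> 'a set" and \<pi> \<theta>m :: "nat \<Rightarrow> 'a ptype"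
    and J KR :: "nat set" and \<epsilon> :: "nat \<Rightarrow> real" and r0 :: "nat \<Rightarrow> 'a \<Rightarrow> real"
  assumes finite_A: "\<And>i. i < n \<Longrightarrow> finite (A i)" and nonempty_A: "\<And>i. i < n \<Longrightarrow> A i \<noteq> {}"
    and J: "J \<subseteq> {..<n}" and KR: "KR \<subseteq> {..<n}"
    and r0: "\<And>i. i < n \<Longrightarrow> mixed_strategy (A i) (r0 i)"
begin

abbreviation players :: "(nat + nat) set" where
  "players \<equiv> KR <+> J"

abbreviation actions :: "nat + nat \<Rightarrow> 'a set" where
  "actions \<equiv> case_sum A A"

definition residents :: "(nat + nat \<Rightarrow> 'a \<Rightarrow> real) \<Rightarrow> nat \<Rightarrow> 'a \<Rightarrow> real" where
  "residents P i = (if i \<in> KR then P (Inl i) else r0 i)"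

definition mutants :: "(nat + nat \<Rightarrow> 'a \<Rightarrow> real) \<Rightarrow> nat \<Rightarrow> 'a \<Rightarrow> real" where
  "mutants P j = P (Inr j)"

definition payoff :: "nat + nat \<Rightarrow> (nat + nat \<Rightarrow> 'a \<Rightarrow> real) \<Rightarrow> real" where
  "payoff k P = mlext n A (case_sum \<pi> \<theta>m k)
     ((entry_aggregate J \<epsilon> (residents P) (mutants P))(case_sum id id k := P k))"

lemma role_less: "k \<in> players \<Longrightarrow> case_sum id id k < n"
  using J KR by auto

lemma payoff_upd:
  assumes "k \<in> players"
  shows "payoff k (P(k := t)) = mlext n A (case_sum \<pi> \<theta>m k)
     ((entry_aggregate J \<epsilon> (residents P) (mutants P))(case_sum id id k := t))"
proof (cases k)
  case (Inl i)
  then have "residents (P(k := t)) = (residents P)(i := t)" "mutants (P(k := t)) = mutants P"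
    using assms by (auto simp: residents_def mutants_def)
  then show ?thesis using Inl by (simp add: payoff_def)
next
  case (Inr j)
  then have "residents (P(k := t)) = residents P" "mutants (P(k := t)) = (mutants P)(j := t)"
    by (auto simp: residents_def mutants_def)
  then show ?thesis using Inr by (simp add: payoff_def)
qed

lemma payoff_linear:
  assumes "k \<in> players"
  shows "payoff k (P(k := t)) = (\<Sum>b\<in>actions k. t b * payoff k (P(k := pure b)))"
proof -
  have "case_sum id id k < n" "finite (actions k)"
    using role_less[OF assms] finite_A by (cases k; simp)+
  then show ?thesis
    unfolding payoff_upd[OF assms] by (cases k) (simp_all add: mlext_fun_upd_linear)
qed

lemma payoff_tendsto:
  assumes lim: "\<And>k b. k \<in> players \<Longrightarrow> b \<in> actions k \<Longrightarrow> (\<lambda>m. Ps m k b) \<longlonglongrightarrow> P k b"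
    and k: "k \<in> players"
  shows "(\<lambda>m. payoff k (Ps m)) \<longlonglongrightarrow> payoff k P"
  unfolding payoff_def
proof (rule mlext_tendsto)
  fix i a assume i: "i < n" and a: "a \<in> A i"
  have res: "(\<lambda>m. residents (Ps m) i a) \<longlonglongrightarrow> residents P i a"
    using lim[OF InlI] a by (simp add: residents_def)
  have mut: "(\<lambda>m. mutants (Ps m) i a) \<longlonglongrightarrow> mutants P i a" if "i \<in> J"
    using lim[OF InrI[OF that]] a by (simp add: mutants_def)
  have own: "(\<lambda>m. Ps m k a) \<longlonglongrightarrow> P k a" if "i = case_sum id id k"
    using lim[OF k] a that by (cases k) auto
  show "(\<lambda>m. ((entry_aggregate J \<epsilon> (residents (Ps m)) (mutants (Ps m)))(case_sum id id k := Ps m k)) i a)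
      \<longlonglongrightarrow> ((entry_aggregate J \<epsilon> (residents P) (mutants P))(case_sum id id k := P k)) i a"
  proof (cases "i = case_sum id id k")
    case False
    show ?thesis
    proof (cases "i \<in> J")
      case True
      then show ?thesis
        using False tendsto_add[OF tendsto_mult[OF tendsto_const res] tendsto_mult[OF tendsto_const mut]]
        by (simp add: entry_aggregate_def)
    qed (use False res in \<open>simp add: entry_aggregate_def\<close>)
  qed (use own in simp)
qed

lemma equilibrium_exists:
  "\<exists>P. strategy_profile players actions P \<and>
     (\<forall>k\<in>players. \<forall>t. mixed_strategy (actions k) t \<longrightarrow> payoff k (P(k := t)) \<le> payoff k P)"
proof -
  have fin: "finite players" using finite_subset[OF J] finite_subset[OF KR] by simp
  have fin_actions: "finite (actions k)" and nonempty_actions: "actions k \<noteq> {}" if "k \<in> players" for k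
    using that role_less[OF that] finite_A nonempty_A by (cases k; simp)+
  have lin: "payoff k (P(k := t)) = (\<Sum>b\<in>actions k. t b * payoff k (P(k := pure b)))"
    if "strategy_profile players actions P" "k \<in> players" "mixed_strategy (actions k) t" for P k t
    using that(2) by (rule payoff_linear)
  have cont: "(\<lambda>m. payoff k (Ps m)) \<longlonglongrightarrow> payoff k P"
    if "\<And>m. strategy_profile players actions (Ps m)" "strategy_profile players actions P"
      "\<And>k b. k \<in> players \<Longrightarrow> b \<in> actions k \<Longrightarrow> (\<lambda>m. Ps m k b) \<longlonglongrightarrow> P k b" "k \<in> players"
    for Ps P k
    using that(3,4) by (rule payoff_tendsto)
  show ?thesis
  proof (rule nash_equilibrium_exists[OF fin fin_actions nonempty_actions lin cont])
    fix P assume "strategy_profile players actions P"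
      and "\<And>k t. k \<in> players \<Longrightarrow> mixed_strategy (actions k) t \<Longrightarrow> payoff k (P(k := t)) \<le> payoff k P"
    then show ?thesis by blast
  qed
qed

lemma payoff_best_reply:
  assumes k: "k \<in> players" and P: "strategy_profile players actions P"
    and eq: "\<And>t. mixed_strategy (actions k) t \<Longrightarrow> payoff k (P(k := t)) \<le> payoff k P"
  shows "best_reply n A (case_sum \<pi> \<theta>m k) (entry_aggregate J \<epsilon> (residents P) (mutants P))
      (case_sum id id k) (P k)"
proof -
  have "payoff k P = payoff k (P(k := P k))" by simp
  then have "mlext n A (case_sum \<pi> \<theta>m k) ((entry_aggregate J \<epsilon> (residents P) (mutants P))(case_sum id id k := t))
      \<le> mlext n A (case_sum \<pi> \<theta>m k) ((entry_aggregate J \<epsilon> (residents P) (mutants P))(case_sum id id k := P k))"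
    if "mixed_strategy (actions k) t" for t
    using eq[OF that] by (simp only: payoff_upd[OF k])
  moreover have "mixed_strategy (actions k) (P k)" using P k by (simp add: strategy_profile_def)
  ultimately show ?thesis by (cases k) (simp_all add: best_reply_def)
qed

end

theorem partial_entry_eq_exists:
  assumes "partial_entry_game n A J KR r0"
  obtains r m where "\<And>i. i < n \<Longrightarrow> mixed_strategy (A i) (r i)" "\<And>i. i \<notin> KR \<Longrightarrow> r i = r0 i"
    "\<And>i. i \<in> KR \<Longrightarrow> best_reply n A (\<pi> i) (entry_aggregate J \<epsilon> r m) i (r i)"
    "\<And>j. j \<in> J \<Longrightarrow> best_reply n A (\<theta>m j) (entry_aggregate J \<epsilon> r m) j (m j)"
proof -
  interpret partial_entry_game n A \<pi> \<theta>m J KR \<epsilon> r0 by (fact assms)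
  obtain P where P: "strategy_profile players actions P"
    and eq: "\<And>k t. k \<in> players \<Longrightarrow> mixed_strategy (actions k) t \<Longrightarrow> payoff k (P(k := t)) \<le> payoff k P"
    using equilibrium_exists by blast
  have br: "best_reply n A (case_sum \<pi> \<theta>m k) (entry_aggregate J \<epsilon> (residents P) (mutants P))
      (case_sum id id k) (P k)" if "k \<in> players" for k
    using payoff_best_reply[OF that P eq[OF that]] .
  show thesis
  proof (rule that)
    show "mixed_strategy (A i) (residents P i)" if "i < n" for i
    proof (cases "i \<in> KR")
      case True
      then have "Inl i \<in> players" by blast
      with True show ?thesis using strategy_profileD[OF P \<open>Inl i \<in> players\<close>] by (simp add: residents_def)
    qed (simp add: residents_def r0 that)
    show "residents P i = r0 i" if "i \<notin> KR" for i
      using that by (simp add: residents_def)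
    show "best_reply n A (\<pi> i) (entry_aggregate J \<epsilon> (residents P) (mutants P)) i (residents P i)"
      if "i \<in> KR" for i
      using br[OF InlI[OF that]] that by (simp add: residents_def)
    show "best_reply n A (\<theta>m j) (entry_aggregate J \<epsilon> (residents P) (mutants P)) j (mutants P j)"
      if "j \<in> J" for j
      using br[OF InrI[OF that]] by (simp add: mutants_def)
  qed
qed

section \<open>Entry into a monomorphic population\<close>

definition fitness_type :: "nat \<Rightarrow> (nat \<Rightarrow> 'a set) \<Rightarrow> (nat \<Rightarrow> 'a ptype) \<Rightarrow> nat \<Rightarrow> 'a ptype" where
  "fitness_type n A \<pi> i = (\<lambda>a. if a \<in> PiE {..<n} A then \<pi> i a else 0)"

definition monomorphic :: "nat \<Rightarrow> (nat \<Rightarrow> 'a set) \<Rightarrow> (nat \<Rightarrow> 'a ptype) \<Rightarrow> nat \<Rightarrow> 'a ptype \<Rightarrow> real" where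
  "monomorphic n A \<pi> i \<theta> = (if \<theta> = fitness_type n A \<pi> i then 1 else 0)"

lemma supp_monomorphic [simp]: "supp (monomorphic n A \<pi> i) = {fitness_type n A \<pi> i}"
  by (auto simp: supp_def monomorphic_def)

lemma mlext_fitness_type [simp]: "mlext n A (fitness_type n A \<pi> i) = mlext n A (\<pi> i)"
  by (auto simp: mlext_def fitness_type_def fun_eq_iff intro!: sum.cong)

lemma fitness_type_in_types: "fitness_type n A \<pi> i \<in> types n A"
  by (simp add: fitness_type_def types_def)

definition entry_strategy ::
  "nat set \<Rightarrow> (nat \<Rightarrow> 'a ptype) \<Rightarrow> (nat \<Rightarrow> 'a \<Rightarrow> real) \<Rightarrow> (nat \<Rightarrow> 'a \<Rightarrow> real) \<Rightarrow> nat \<Rightarrow> 'a ptype \<Rightarrow> 'a \<Rightarrow> real"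
where
  "entry_strategy J \<theta>m r m i \<theta> = (if i \<in> J \<and> \<theta> = \<theta>m i then m i else r i)"

locale monomorphic_entry =
  fixes n :: nat and A :: "nat \<Rightarrow> 'a set" and \<pi> :: "nat \<Rightarrow> 'a ptype"
    and J :: "nat set" and \<theta>m :: "nat \<Rightarrow> 'a ptype" and \<epsilon> :: "nat \<Rightarrow> real"
  assumes J: "J \<subseteq> {..<n}"
    and mutant_types: "\<And>j. j \<in> J \<Longrightarrow> \<theta>m j \<in> types n A - supp (monomorphic n A \<pi> j)"
    and shares: "\<And>j. j \<in> J \<Longrightarrow> 0 < \<epsilon> j \<and> \<epsilon> j < 1"
begin

abbreviation \<rho> :: "nat \<Rightarrow> 'a ptype" where
  "\<rho> \<equiv> fitness_type n A \<pi>"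

abbreviation \<mu>' :: "nat \<Rightarrow> 'a ptype \<Rightarrow> real" where
  "\<mu>' \<equiv> post_entry (monomorphic n A \<pi>) J \<theta>m \<epsilon>"

lemma mutant_ne: "j \<in> J \<Longrightarrow> \<theta>m j \<noteq> \<rho> j"
  using mutant_types by fastforce

lemma post_entry_mutant_role:
  "j \<in> J \<Longrightarrow> \<mu>' j \<theta> = (if \<theta> = \<rho> j then 1 - \<epsilon> j else if \<theta> = \<theta>m j then \<epsilon> j else 0)"
  using mutant_ne[of j] by (auto simp: post_entry_def monomorphic_def)

lemma supp_post_entry: "supp (\<mu>' i) = (if i \<in> J then {\<rho> i, \<theta>m i} else {\<rho> i})"
proof (cases "i \<in> J")
  case True
  then show ?thesis using shares[OF True] mutant_ne[OF True] by (auto simp: supp_def post_entry_mutant_role)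
next
  case False
  then show ?thesis by (auto simp: supp_def post_entry_def monomorphic_def split: if_splits)
qed

lemma aggregate_post_entry:
  "aggregate \<mu>' s = entry_aggregate J \<epsilon> (\<lambda>i. s i (\<rho> i)) (\<lambda>i. s i (\<theta>m i))"
proof (intro ext)
  fix i a
  show "aggregate \<mu>' s i a = entry_aggregate J \<epsilon> (\<lambda>i. s i (\<rho> i)) (\<lambda>i. s i (\<theta>m i)) i a"
    using mutant_ne[of i]
    by (cases "i \<in> J") (simp_all add: aggregate_def supp_post_entry entry_aggregate_def
        post_entry_mutant_role, simp add: post_entry_def monomorphic_def)
qed

lemma exp_util_post_entry:
  "i < n \<Longrightarrow> exp_util n A \<mu>' s i \<theta> t
     = mlext n A \<theta> ((entry_aggregate J \<epsilon> (\<lambda>i. s i (\<rho> i)) (\<lambda>i. s i (\<theta>m i)))(i := t))"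
  by (simp add: exp_util_eq_mlext_aggregate supp_post_entry aggregate_post_entry)

lemma avg_fitness_post_entry:
  "avg_fitness n A \<pi> \<mu>' s i \<theta>
     = mlext n A (\<pi> i) ((entry_aggregate J \<epsilon> (\<lambda>i. s i (\<rho> i)) (\<lambda>i. s i (\<theta>m i)))(i := s i \<theta>))"
  by (simp add: avg_fitness_def aggregate_post_entry)

text \<open>Incumbents maximise fitness against the aggregate play, which is all that matters without
  observability; hence a mutant can at best tie, and ties everywhere mean balance.\<close>

lemma incumbents_not_outperformed:
  assumes s: "s \<in> BNE_set n A \<mu>'"
  shows "(\<exists>j\<in>J. \<forall>\<theta>\<in>supp (monomorphic n A \<pi> j). avg_fitness n A \<pi> \<mu>' s j \<theta> > avg_fitness n A \<pi> \<mu>' s j (\<theta>m j))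
    \<or> balanced n A \<pi> \<mu>' s"
proof -
  have le: "avg_fitness n A \<pi> \<mu>' s j (\<theta>m j) \<le> avg_fitness n A \<pi> \<mu>' s j (\<rho> j)" if j: "j \<in> J" for j
  proof -
    have "j < n" using J j by auto
    moreover have "\<theta>m j \<in> supp (\<mu>' j)" "\<rho> j \<in> supp (\<mu>' j)" using j by (simp_all add: supp_post_entry)
    ultimately have "exp_util n A \<mu>' s j (\<rho> j) (s j (\<theta>m j)) \<le> exp_util n A \<mu>' s j (\<rho> j) (s j (\<rho> j))"
      using s unfolding BNE_set_def by blast
    then show ?thesis using \<open>j < n\<close> by (simp add: exp_util_post_entry avg_fitness_post_entry)
  qed
  show ?thesis
  proof (cases "\<exists>j\<in>J. avg_fitness n A \<pi> \<mu>' s j (\<theta>m j) < avg_fitness n A \<pi> \<mu>' s j (\<rho> j)")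
    case False
    then have "avg_fitness n A \<pi> \<mu>' s j (\<theta>m j) = avg_fitness n A \<pi> \<mu>' s j (\<rho> j)" if "j \<in> J" for j
      using le[OF that] that by fastforce
    then have "balanced n A \<pi> \<mu>' s"
      by (auto simp: balanced_def supp_post_entry split: if_splits)
    then show ?thesis ..
  qed auto
qed

lemma post_entry_eq_nearby:
  assumes eq: "post_entry_eq n A \<pi> J \<theta>m \<epsilon> r m"
    and near: "\<And>i. i < n \<Longrightarrow> strat_dist (A i) (r i) (\<sigma> i) \<le> \<eta>"
  shows "entry_strategy J \<theta>m r m \<in> nearby_BNE n A (monomorphic n A \<pi>) \<mu>' (\<lambda>i \<theta>. \<sigma> i) \<eta>"
proof -
  let ?s = "entry_strategy J \<theta>m r m"
  have res: "?s i (\<rho> i) = r i" for i using mutant_ne[of i] by (auto simp: entry_strategy_def)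
  have mut: "i \<in> J \<Longrightarrow> ?s i (\<theta>m i) = m i" for i by (simp add: entry_strategy_def)
  have agg: "entry_aggregate J \<epsilon> (\<lambda>i. ?s i (\<rho> i)) (\<lambda>i. ?s i (\<theta>m i)) = entry_aggregate J \<epsilon> r m"
    by (auto simp: entry_aggregate_def res mut fun_eq_iff)
  have "?s \<in> BNE_set n A \<mu>'"
    unfolding BNE_set_def
  proof (intro CollectI allI impI ballI)
    fix i \<theta> assume i: "i < n" and \<theta>: "\<theta> \<in> supp (\<mu>' i)"
    have "best_reply n A \<theta> (entry_aggregate J \<epsilon> r m) i (?s i \<theta>)"
      using eq \<theta> i by (auto simp: post_entry_eq_def supp_post_entry res mut best_reply_def split: if_splits)
    then show "mixed_strategy (A i) (?s i \<theta>) \<and> (\<forall>t. mixed_strategy (A i) t \<longrightarrow>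
        exp_util n A \<mu>' ?s i \<theta> t \<le> exp_util n A \<mu>' ?s i \<theta> (?s i \<theta>))"
      using i by (simp add: exp_util_post_entry agg best_reply_def)
  qed
  then show ?thesis using near by (simp add: nearby_BNE_def res)
qed

end

lemma monomorphic_configuration:
  assumes ne: "nash_eq n A \<pi> \<sigma>"
  shows "configuration n A (monomorphic n A \<pi>) (\<lambda>i \<theta>. \<sigma> i)"
    and "balanced n A \<pi> (monomorphic n A \<pi>) (\<lambda>i \<theta>. \<sigma> i)"
    and "aggregate (monomorphic n A \<pi>) (\<lambda>i \<theta>. \<sigma> i) = \<sigma>"
proof -
  show agg: "aggregate (monomorphic n A \<pi>) (\<lambda>i \<theta>. \<sigma> i) = \<sigma>"
    by (simp add: aggregate_def monomorphic_def fun_eq_iff)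
  have "population n A (monomorphic n A \<pi>)"
    by (auto simp: population_def fitness_type_in_types monomorphic_def)
  moreover have "(\<lambda>i \<theta>. \<sigma> i) \<in> BNE_set n A (monomorphic n A \<pi>)"
    using ne by (auto simp: BNE_set_def exp_util_eq_mlext_aggregate agg nash_eq_iff_best_reply best_reply_def)
  ultimately show "configuration n A (monomorphic n A \<pi>) (\<lambda>i \<theta>. \<sigma> i)"
    by (simp add: configuration_def)
  show "balanced n A \<pi> (monomorphic n A \<pi>) (\<lambda>i \<theta>. \<sigma> i)"
    by (simp add: balanced_def)
qed

definition robust_to_entry :: "nat \<Rightarrow> (nat \<Rightarrow> 'a set) \<Rightarrow> (nat \<Rightarrow> 'a ptype) \<Rightarrow> (nat \<Rightarrow> 'a \<Rightarrow> real) \<Rightarrow> bool" where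
  "robust_to_entry n A \<pi> \<sigma> \<longleftrightarrow> (\<forall>J \<theta>m \<eta>. J \<subseteq> {..<n} \<and> 0 < \<eta> \<longrightarrow>
     (\<exists>\<epsilon>0>0. \<forall>\<epsilon>. (\<forall>j\<in>J. 0 < \<epsilon> j \<and> \<epsilon> j < \<epsilon>0) \<longrightarrow>
        (\<exists>r m. post_entry_eq n A \<pi> J \<theta>m \<epsilon> r m \<and> (\<forall>i<n. strat_dist (A i) (r i) (\<sigma> i) \<le> \<eta>))))"

theorem stable_no_obs_if_robust_to_entry:
  assumes ne: "nash_eq n A \<pi> \<sigma>" and robust: "robust_to_entry n A \<pi> \<sigma>"
  shows "stable_no_obs n A \<pi> \<sigma>"
proof -
  let ?\<mu> = "monomorphic n A \<pi>" and ?s = "\<lambda>(i::nat) (\<theta>::'a ptype). \<sigma> i"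
  have "stable_config n A \<pi> ?\<mu> ?s"
    unfolding stable_config_def
  proof (intro conjI monomorphic_configuration[OF ne] allI impI, goal_cases)
    case (1 J \<theta>m \<eta>)
    then obtain \<epsilon>0 where \<epsilon>0: "0 < \<epsilon>0" and eqs: "\<And>\<epsilon>. \<forall>j\<in>J. 0 < \<epsilon> j \<and> \<epsilon> j < \<epsilon>0 \<Longrightarrow>
        \<exists>r m. post_entry_eq n A \<pi> J \<theta>m \<epsilon> r m \<and> (\<forall>i<n. strat_dist (A i) (r i) (\<sigma> i) \<le> \<eta> / 2)"
      using robust[unfolded robust_to_entry_def, rule_format, of J "\<eta> / 2" \<theta>m] by auto
    have "finite J" using 1 finite_subset by auto
    show ?case
    proof (rule exI[of _ "\<eta> / 2"], rule exI[of _ "min \<epsilon>0 (1/2)"], intro conjI allI impI, goal_cases)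
      case (5 \<epsilon>)
      interpret monomorphic_entry n A \<pi> J \<theta>m \<epsilon>
        using 1 5 by unfold_locales auto
      have "\<epsilon> j < \<epsilon>0" if "j \<in> J" for j
        using 5 Max_ge[OF finite_imageI[OF \<open>finite J\<close>], of "\<epsilon> j" \<epsilon>] that by fastforce
      then obtain r m where "post_entry_eq n A \<pi> J \<theta>m \<epsilon> r m" "\<And>i. i < n \<Longrightarrow> strat_dist (A i) (r i) (\<sigma> i) \<le> \<eta> / 2"
        using eqs 5 by blast
      from post_entry_eq_nearby[OF this] incumbents_not_outperformed show ?case
        by (auto simp: nearby_BNE_def)
    qed (use 1 \<epsilon>0 in auto)
  qed
  then show ?thesis
    unfolding stable_no_obs_def using monomorphic_configuration(3)[OF ne] by (intro exI[of _ ?\<mu>] exI[of _ ?s]) simp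
qed

section \<open>Strict equilibria\<close>

lemma strict_eq_deviation_worse_near:
  assumes sne: "strict_nash_eq n A \<pi> \<sigma>" and i: "i < n" and b: "b \<in> A i" and fin: "finite (A i)"
  shows "\<exists>d>0. \<forall>x. near n A x \<sigma> d \<longrightarrow> mlext n A (\<pi> i) (x(i := pure b)) \<le> mlext n A (\<pi> i) (x(i := \<sigma> i))"
proof (cases "pure b = \<sigma> i")
  case True
  then show ?thesis by (intro exI[of _ 1]) simp
next
  case False
  define g where "g = mlext n A (\<pi> i) \<sigma> - mlext n A (\<pi> i) (\<sigma>(i := pure b))"
  have "0 < g"
    using sne i mixed_strategy_pure[OF fin b] False by (simp add: g_def strict_nash_eq_def)
  then obtain d1 d2 where d: "0 < d1" "0 < d2"
    and d1: "\<And>x. near n A x (\<sigma>(i := pure b)) d1 \<Longrightarrow>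
      \<bar>mlext n A (\<pi> i) x - mlext n A (\<pi> i) (\<sigma>(i := pure b))\<bar> < g / 2"
    and d2: "\<And>x. near n A x \<sigma> d2 \<Longrightarrow> \<bar>mlext n A (\<pi> i) x - mlext n A (\<pi> i) \<sigma>\<bar> < g / 2"
    using mlext_continuous_at[of "g / 2"] by (metis half_gt_zero)
  show ?thesis
  proof (intro exI[of _ "min d1 d2"] conjI allI impI)
    fix x assume "near n A x \<sigma> (min d1 d2)"
    then have "near n A x \<sigma> d1" "near n A x \<sigma> d2" by (auto intro: near_mono)
    then have "near n A (x(i := pure b)) (\<sigma>(i := pure b)) d1" "near n A (x(i := \<sigma> i)) (\<sigma>(i := \<sigma> i)) d2"
      using d by (blast intro: near_fun_upd)+
    then have "\<bar>mlext n A (\<pi> i) (x(i := pure b)) - mlext n A (\<pi> i) (\<sigma>(i := pure b))\<bar> < g / 2"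
      "\<bar>mlext n A (\<pi> i) (x(i := \<sigma> i)) - mlext n A (\<pi> i) \<sigma>\<bar> < g / 2"
      using d1 d2 by simp_all
    then have "mlext n A (\<pi> i) (x(i := pure b)) < mlext n A (\<pi> i) (\<sigma>(i := pure b)) + g / 2"
      "mlext n A (\<pi> i) \<sigma> - g / 2 < mlext n A (\<pi> i) (x(i := \<sigma> i))"
      by linarith+
    then show "mlext n A (\<pi> i) (x(i := pure b)) \<le> mlext n A (\<pi> i) (x(i := \<sigma> i))"
      unfolding g_def by argo
  qed (use d in simp)
qed

lemma strict_eq_best_reply_near:
  assumes finite_A: "\<And>i. i < n \<Longrightarrow> finite (A i)" and sne: "strict_nash_eq n A \<pi> \<sigma>"
  obtains d where "0 < d" and "\<And>x i. near n A x \<sigma> d \<Longrightarrow> i < n \<Longrightarrow> best_reply n A (\<pi> i) x i (\<sigma> i)"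
proof -
  have "\<exists>d>0. \<forall>x. near n A x \<sigma> d \<longrightarrow> (\<forall>(i, b)\<in>Sigma {..<n} A.
      mlext n A (\<pi> i) (x(i := pure b)) \<le> mlext n A (\<pi> i) (x(i := \<sigma> i)))"
    using finite_A strict_eq_deviation_worse_near[OF sne]
    by (intro finite_common_radius) auto
  then obtain d where "0 < d"
    and dev: "\<And>x i b. near n A x \<sigma> d \<Longrightarrow> i < n \<Longrightarrow> b \<in> A i \<Longrightarrow>
      mlext n A (\<pi> i) (x(i := pure b)) \<le> mlext n A (\<pi> i) (x(i := \<sigma> i))"
    by blast
  moreover have "mixed_strategy (A i) (\<sigma> i)" if "i < n" for i
    using sne that by (simp add: strict_nash_eq_def nash_eq_def mixed_profile_def)
  ultimately show thesis
    using that best_replyI_pure[where A = A, OF _ finite_A] by blast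
qed

lemma entry_aggregate_near:
  assumes d: "0 < d" and eps: "\<And>j. j \<in> J \<Longrightarrow> 0 \<le> \<epsilon> j \<and> \<epsilon> j < d"
    and mixed: "\<And>j. j \<in> J \<Longrightarrow> j < n \<Longrightarrow> mixed_strategy (A j) (r j) \<and> mixed_strategy (A j) (m j)"
    and finite_A: "\<And>j. j < n \<Longrightarrow> finite (A j)"
  shows "near n A (entry_aggregate J \<epsilon> r m) r d"
  unfolding near_def
proof (intro allI impI ballI)
  fix j a assume j: "j < n" and a: "a \<in> A j"
  show "\<bar>entry_aggregate J \<epsilon> r m j a - r j a\<bar> < d"
  proof (cases "j \<in> J")
    case True
    have "0 \<le> m j a" "m j a \<le> 1" "0 \<le> r j a" "r j a \<le> 1"
      using mixed[OF True j] mixed_strategy_bounds[OF _ finite_A[OF j]] by blast+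
    then have "\<bar>m j a - r j a\<bar> \<le> 1" by linarith
    then have "\<epsilon> j * \<bar>m j a - r j a\<bar> \<le> \<epsilon> j"
      using eps[OF True] mult_left_le by blast
    moreover have "entry_aggregate J \<epsilon> r m j a - r j a = \<epsilon> j * (m j a - r j a)"
      using True by (simp add: entry_aggregate_def algebra_simps)
    ultimately show ?thesis using eps[OF True] by (simp add: abs_mult)
  qed (simp add: entry_aggregate_def d)
qed

theorem robust_to_entry_strict:
  assumes finite_A: "\<And>i. i < n \<Longrightarrow> finite (A i)" and nonempty_A: "\<And>i. i < n \<Longrightarrow> A i \<noteq> {}"
    and sne: "strict_nash_eq n A \<pi> \<sigma>"
  shows "robust_to_entry n A \<pi> \<sigma>"
  unfolding robust_to_entry_def
proof (intro allI impI)
  fix J \<theta>m and \<eta> :: real assume h: "J \<subseteq> {..<n} \<and> 0 < \<eta>"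
  obtain d where d: "0 < d" and br: "\<And>x i. near n A x \<sigma> d \<Longrightarrow> i < n \<Longrightarrow> best_reply n A (\<pi> i) x i (\<sigma> i)"
    using strict_eq_best_reply_near[OF finite_A sne] by blast
  have \<sigma>: "mixed_strategy (A i) (\<sigma> i)" if "i < n" for i
    using sne that by (simp add: strict_nash_eq_def nash_eq_def mixed_profile_def)
  show "\<exists>\<epsilon>0>0. \<forall>\<epsilon>. (\<forall>j\<in>J. 0 < \<epsilon> j \<and> \<epsilon> j < \<epsilon>0) \<longrightarrow>
      (\<exists>r m. post_entry_eq n A \<pi> J \<theta>m \<epsilon> r m \<and> (\<forall>i<n. strat_dist (A i) (r i) (\<sigma> i) \<le> \<eta>))"
  proof (intro exI[of _ d] conjI allI impI d)
    fix \<epsilon> assume eps: "\<forall>j\<in>J. 0 < \<epsilon> j \<and> \<epsilon> j < d"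
    have "partial_entry_game n A J {} \<sigma>"
      using finite_A nonempty_A h \<sigma> by unfold_locales auto
    then obtain r m where mixed: "\<And>i. i < n \<Longrightarrow> mixed_strategy (A i) (r i)" and frozen: "\<And>i. r i = \<sigma> i"
      and mutants: "\<And>j. j \<in> J \<Longrightarrow> best_reply n A (\<theta>m j) (entry_aggregate J \<epsilon> r m) j (m j)"
      by (rule partial_entry_eq_exists[where \<pi> = \<pi> and \<theta>m = \<theta>m and \<epsilon> = \<epsilon>]) auto
    have r: "r = \<sigma>" using frozen by blast
    have "near n A (entry_aggregate J \<epsilon> \<sigma> m) \<sigma> d"
      using d eps \<sigma> mutants finite_A h by (intro entry_aggregate_near) (auto simp: r best_reply_def)
    then have "post_entry_eq n A \<pi> J \<theta>m \<epsilon> r m"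
      using br mutants by (simp add: post_entry_eq_def r)
    moreover have "strat_dist (A i) (r i) (\<sigma> i) \<le> \<eta>" for i
      using h by (simp add: r strat_dist_def)
    ultimately show "\<exists>r m. post_entry_eq n A \<pi> J \<theta>m \<epsilon> r m \<and> (\<forall>i<n. strat_dist (A i) (r i) (\<sigma> i) \<le> \<eta>)"
      by blast
  qed
qed

section \<open>Completely mixed equilibria\<close>

lemma completely_mixed_lower_bound:
  assumes "\<And>i. i < n \<Longrightarrow> finite (A i)" and "completely_mixed n A \<sigma>"
  obtains c where "0 < c" and "\<And>i a. i < n \<Longrightarrow> a \<in> A i \<Longrightarrow> c \<le> \<sigma> i a"
proof
  let ?S = "(\<lambda>(i, a). \<sigma> i a) ` Sigma {..<n} A"
  have "finite ?S" using assms(1) by auto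
  then show "0 < Min (insert 1 ?S)"
    using assms(2) by (auto simp: completely_mixed_def)
  show "Min (insert 1 ?S) \<le> \<sigma> i a" if "i < n" "a \<in> A i" for i a
    using \<open>finite ?S\<close> that by (intro Min_le) auto
qed

lemma strat_dist_le_card:
  assumes "finite B" and "\<And>a. a \<in> B \<Longrightarrow> \<bar>x a - y a\<bar> \<le> \<delta>"
  shows "strat_dist B x y \<le> real (card B) * \<delta>"
proof -
  have "strat_dist B x y = L2_set (\<lambda>a. x a - y a) B" by (simp add: strat_dist_def L2_set_def)
  also have "\<dots> \<le> (\<Sum>a\<in>B. \<bar>x a - y a\<bar>)" by (rule L2_set_le_sum_abs)
  also have "\<dots> \<le> real (card B) * \<delta>" using sum_bounded_above[of B "\<lambda>a. \<bar>x a - y a\<bar>" \<delta>] assms(2) by simp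
  finally show ?thesis .
qed

text \<open>In a completely mixed equilibrium every pure action earns the equilibrium payoff.\<close>

lemma completely_mixed_eq_best_reply:
  assumes ne: "nash_eq n A \<pi> \<sigma>" and cm: "completely_mixed n A \<sigma>" and i: "i < n"
    and fin: "finite (A i)" and t: "mixed_strategy (A i) t"
  shows "best_reply n A (\<pi> i) \<sigma> i t"
proof -
  define v where "v = mlext n A (\<pi> i) \<sigma>"
  define w where "w b = mlext n A (\<pi> i) (\<sigma>(i := pure b))" for b
  have \<sigma>: "best_reply n A (\<pi> i) \<sigma> i (\<sigma> i)" and \<sigma>i: "mixed_strategy (A i) (\<sigma> i)"
    using ne i by (auto simp: nash_eq_iff_best_reply mixed_profile_def)
  have below: "w b \<le> v" if "b \<in> A i" for b
    using \<sigma> mixed_strategy_pure[OF fin that] by (simp add: best_reply_def w_def v_def)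
  have "v = (\<Sum>b\<in>A i. \<sigma> i b * w b)"
    using mlext_fun_upd_linear[where A = A, OF i fin, of "\<pi> i" \<sigma> "\<sigma> i"] by (simp add: v_def w_def)
  then have "(\<Sum>b\<in>A i. \<sigma> i b * (v - w b)) = 0"
    using mixed_strategy_sum_mult_const[OF \<sigma>i, of v] by (simp add: right_diff_distrib sum_subtractf)
  moreover have "0 \<le> \<sigma> i b * (v - w b)" if "b \<in> A i" for b
    using below[OF that] \<sigma>i that by (simp add: mixed_strategy_def)
  ultimately have "\<sigma> i b * (v - w b) = 0" if "b \<in> A i" for b
    using sum_nonneg_eq_0_iff[OF fin, of "\<lambda>b. \<sigma> i b * (v - w b)"] that by simp
  then have equal: "w b = v" if "b \<in> A i" for b
    using cm i that by (fastforce simp: completely_mixed_def)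
  have "mlext n A (\<pi> i) (\<sigma>(i := t)) = v"
    using mlext_fun_upd_linear[where A = A, OF i fin, of "\<pi> i" \<sigma> t] mixed_strategy_sum_mult_const[OF t, of v]
    by (simp add: equal w_def[symmetric] cong: sum.cong)
  then show ?thesis
    using equal by (intro best_replyI_pure[where A = A, OF i fin t]) (simp add: w_def)
qed

text \<open>Residents that shift their play away from the mutants' so that the aggregate stays \<open>\<sigma>\<close>.\<close>

definition compensating ::
  "nat set \<Rightarrow> (nat \<Rightarrow> real) \<Rightarrow> (nat \<Rightarrow> 'a \<Rightarrow> real) \<Rightarrow> (nat \<Rightarrow> 'a \<Rightarrow> real) \<Rightarrow> nat \<Rightarrow> 'a \<Rightarrow> real" where
  "compensating J \<epsilon> \<sigma> m i = (if i \<in> J then (\<lambda>a. (\<sigma> i a - \<epsilon> i * m i a) / (1 - \<epsilon> i)) else \<sigma> i)"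

lemma entry_aggregate_compensating:
  assumes "\<And>j. j \<in> J \<Longrightarrow> \<epsilon> j < 1"
  shows "entry_aggregate J \<epsilon> (compensating J \<epsilon> \<sigma> m) m = \<sigma>"
  using assms by (force simp: entry_aggregate_def compensating_def fun_eq_iff)

lemma compensating_outside [simp]: "i \<notin> J \<Longrightarrow> compensating J \<epsilon> \<sigma> m i = \<sigma> i"
  by (simp add: compensating_def)

lemma compensating_mixed:
  assumes "i \<in> J" and \<sigma>: "mixed_strategy (A i) (\<sigma> i)" and m: "mixed_strategy (A i) (m i)" and fin: "finite (A i)"
    and eps: "0 \<le> \<epsilon> i" "\<epsilon> i < 1" and small: "\<And>a. a \<in> A i \<Longrightarrow> \<epsilon> i \<le> \<sigma> i a"
  shows "mixed_strategy (A i) (compensating J \<epsilon> \<sigma> m i)"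
proof -
  have "\<epsilon> i * m i a \<le> \<sigma> i a" if "a \<in> A i" for a
    using mult_left_le[OF mixed_strategy_bounds(2)[OF m fin, of a] eps(1)] small[OF that] by linarith
  moreover have "(\<Sum>a\<in>A i. (\<sigma> i a - \<epsilon> i * m i a) / (1 - \<epsilon> i)) = 1"
    using \<sigma> m eps(2)
    by (simp add: sum_divide_distrib[symmetric] sum_subtractf sum_distrib_left[symmetric] mixed_strategy_def)
  ultimately show ?thesis
    using \<open>i \<in> J\<close> \<sigma> m eps by (auto simp: compensating_def mixed_strategy_def)
qed

lemma compensating_close:
  assumes "i \<in> J" and \<sigma>: "mixed_strategy (A i) (\<sigma> i)" and m: "mixed_strategy (A i) (m i)" and fin: "finite (A i)"
    and eps: "0 \<le> \<epsilon> i" "\<epsilon> i \<le> 1/2"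
  shows "\<bar>compensating J \<epsilon> \<sigma> m i a - \<sigma> i a\<bar> \<le> 2 * \<epsilon> i"
proof -
  have pos: "0 < 1 - \<epsilon> i" using eps by simp
  have "\<bar>\<sigma> i a - m i a\<bar> \<le> 1"
    using mixed_strategy_bounds[OF \<sigma> fin, of a] mixed_strategy_bounds[OF m fin, of a] by linarith
  have "compensating J \<epsilon> \<sigma> m i a - \<sigma> i a = \<epsilon> i * (\<sigma> i a - m i a) / (1 - \<epsilon> i)"
    using \<open>i \<in> J\<close> pos by (simp add: compensating_def field_simps)
  then have "\<bar>compensating J \<epsilon> \<sigma> m i a - \<sigma> i a\<bar> = \<epsilon> i * \<bar>\<sigma> i a - m i a\<bar> / (1 - \<epsilon> i)"
    using eps pos by (simp add: abs_mult)
  also have "\<dots> \<le> \<epsilon> i / (1 - \<epsilon> i)"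
    using \<open>\<bar>\<sigma> i a - m i a\<bar> \<le> 1\<close> eps(1) pos by (simp add: divide_right_mono mult_left_le)
  also have "\<dots> \<le> 2 * \<epsilon> i"
    using mult_left_mono[of "1/2" "1 - \<epsilon> i" "2 * \<epsilon> i"] eps pos by (simp add: divide_le_eq)
  finally show ?thesis .
qed

lemma compensating_strat_dist:
  assumes "i \<in> J" and "mixed_strategy (A i) (\<sigma> i)" and "mixed_strategy (A i) (m i)" and "finite (A i)"
    and "0 \<le> \<epsilon> i" "\<epsilon> i \<le> 1/2"
  shows "strat_dist (A i) (compensating J \<epsilon> \<sigma> m i) (\<sigma> i) \<le> real (card (A i)) * (2 * \<epsilon> i)"
  using assms compensating_close[where A = A and \<sigma> = \<sigma> and m = m, OF assms(1-4)]
  by (intro strat_dist_le_card) simp_all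

lemma compensating_post_entry_eq:
  assumes finite_A: "\<And>i. i < n \<Longrightarrow> finite (A i)" and ne: "nash_eq n A \<pi> \<sigma>"
    and cm: "completely_mixed n A \<sigma>" and J: "J \<subseteq> {..<n}"
    and mutants: "\<And>j. j \<in> J \<Longrightarrow> best_reply n A (\<theta>m j) \<sigma> j (m j)"
    and eps: "\<And>j. j \<in> J \<Longrightarrow> 0 \<le> \<epsilon> j \<and> \<epsilon> j < 1"
    and small: "\<And>j a. j \<in> J \<Longrightarrow> a \<in> A j \<Longrightarrow> \<epsilon> j \<le> \<sigma> j a"
  shows "post_entry_eq n A \<pi> J \<theta>m \<epsilon> (compensating J \<epsilon> \<sigma> m) m"
proof -
  have \<sigma>: "mixed_strategy (A i) (\<sigma> i)" if "i < n" for i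
    using ne that by (simp add: nash_eq_def mixed_profile_def)
  have "mixed_strategy (A i) (compensating J \<epsilon> \<sigma> m i)" if i: "i < n" for i
  proof (cases "i \<in> J")
    case True
    then show ?thesis
      using \<sigma>[OF i] mutants[OF True] finite_A[OF i] eps[OF True] small[OF True]
      by (intro compensating_mixed) (auto simp: best_reply_def)
  qed (simp add: \<sigma> i)
  then show ?thesis
    using mutants completely_mixed_eq_best_reply[OF ne cm _ finite_A] eps
    by (simp add: post_entry_eq_def entry_aggregate_compensating)
qed

theorem robust_to_entry_completely_mixed:
  assumes finite_A: "\<And>i. i < n \<Longrightarrow> finite (A i)" and nonempty_A: "\<And>i. i < n \<Longrightarrow> A i \<noteq> {}"
    and ne: "nash_eq n A \<pi> \<sigma>" and cm: "completely_mixed n A \<sigma>"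
  shows "robust_to_entry n A \<pi> \<sigma>"
  unfolding robust_to_entry_def
proof (intro allI impI)
  fix J \<theta>m and \<eta> :: real assume h: "J \<subseteq> {..<n} \<and> 0 < \<eta>"
  then have J: "J \<subseteq> {..<n}" by simp
  have \<sigma>: "mixed_strategy (A i) (\<sigma> i)" if "i < n" for i
    using ne that by (simp add: nash_eq_def mixed_profile_def)
  obtain b where b: "\<And>j. j \<in> J \<Longrightarrow> b j \<in> A j \<and> best_reply n A (\<theta>m j) \<sigma> j (pure (b j))"
    using exists_pure_best_replies[where A = A and \<theta>m = \<theta>m and x = \<sigma>, OF finite_A nonempty_A J] by blast
  obtain c where c: "0 < c" "\<And>i a. i < n \<Longrightarrow> a \<in> A i \<Longrightarrow> c \<le> \<sigma> i a"
    using completely_mixed_lower_bound[OF finite_A cm] by blast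
  define M where "M = (\<Sum>i<n. real (card (A i))) + 1"
  have M: "1 \<le> M" by (simp add: M_def sum_nonneg)
  have card_le_M: "real (card (A i)) \<le> M" if "i < n" for i
    using member_le_sum[of i "{..<n}" "\<lambda>i. real (card (A i))"] that by (simp add: M_def)
  show "\<exists>\<epsilon>0>0. \<forall>\<epsilon>. (\<forall>j\<in>J. 0 < \<epsilon> j \<and> \<epsilon> j < \<epsilon>0) \<longrightarrow>
      (\<exists>r m. post_entry_eq n A \<pi> J \<theta>m \<epsilon> r m \<and> (\<forall>i<n. strat_dist (A i) (r i) (\<sigma> i) \<le> \<eta>))"
  proof (intro exI[of _ "min (min c (1/2)) (\<eta> / (2 * M))"] conjI allI impI)
    show "0 < min (min c (1/2)) (\<eta> / (2 * M))" using c h M by simp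
    fix \<epsilon> assume "\<forall>j\<in>J. 0 < \<epsilon> j \<and> \<epsilon> j < min (min c (1/2)) (\<eta> / (2 * M))"
    then have eps: "0 < \<epsilon> j" "\<epsilon> j < c" "\<epsilon> j \<le> 1/2" "\<epsilon> j \<le> \<eta> / (2 * M)" if "j \<in> J" for j
      using that by auto
    define m where "m j = pure (b j)" for j
    have "post_entry_eq n A \<pi> J \<theta>m \<epsilon> (compensating J \<epsilon> \<sigma> m) m"
    proof (rule compensating_post_entry_eq[OF finite_A ne cm J])
      show "best_reply n A (\<theta>m j) \<sigma> j (m j)" if "j \<in> J" for j
        using b[OF that] by (simp add: m_def)
      show "0 \<le> \<epsilon> j \<and> \<epsilon> j < 1" if "j \<in> J" for j
        using eps[OF that] by simp
      show "\<epsilon> j \<le> \<sigma> j a" if "j \<in> J" "a \<in> A j" for j a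
        using eps(2)[OF that(1)] c(2)[of j a] that J by auto
    qed
    moreover have "strat_dist (A i) (compensating J \<epsilon> \<sigma> m i) (\<sigma> i) \<le> \<eta>" if i: "i < n" for i
    proof (cases "i \<in> J")
      case True
      have "mixed_strategy (A i) (m i)" using b[OF True] by (simp add: m_def best_reply_def)
      then have "strat_dist (A i) (compensating J \<epsilon> \<sigma> m i) (\<sigma> i) \<le> real (card (A i)) * (2 * \<epsilon> i)"
        using True \<sigma>[OF i] finite_A[OF i] eps[OF True] by (intro compensating_strat_dist) auto
      also have "\<dots> \<le> M * (2 * (\<eta> / (2 * M)))"
        using card_le_M[OF i] eps[OF True] by (intro mult_mono) auto
      finally show ?thesis using M by simp
    qed (use h in \<open>simp add: strat_dist_def\<close>)
    ultimately show "\<exists>r m. post_entry_eq n A \<pi> J \<theta>m \<epsilon> r m \<and> (\<forall>i<n. strat_dist (A i) (r i) (\<sigma> i) \<le> \<eta>)"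
      by blast
  qed
qed

section \<open>Unique equilibria\<close>

lemma mixed_strategy_limit:
  assumes "finite B" and T: "\<And>k. mixed_strategy B (T k)"
    and lim: "\<And>a. a \<in> B \<Longrightarrow> (\<lambda>k. T k a) \<longlonglongrightarrow> t a" and outside: "\<And>a. a \<notin> B \<Longrightarrow> t a = 0"
  shows "mixed_strategy B t"
proof -
  have "0 \<le> t a" if "a \<in> B" for a
    using T lim[OF that] that by (auto simp: mixed_strategy_def intro: LIMSEQ_le_const)
  moreover have "(\<lambda>k. \<Sum>a\<in>B. T k a) \<longlonglongrightarrow> (\<Sum>a\<in>B. t a)"
    using lim by (rule tendsto_sum)
  then have "(\<Sum>a\<in>B. t a) = 1"
    using T by (simp add: mixed_strategy_def LIMSEQ_const_iff)
  ultimately show ?thesis using outside by (simp add: mixed_strategy_def)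
qed

lemma best_reply_limit:
  assumes i: "i < n" and br: "\<And>k. best_reply n A \<theta> (X k) i (T k)"
    and X: "\<And>j a. j < n \<Longrightarrow> a \<in> A j \<Longrightarrow> (\<lambda>k. X k j a) \<longlonglongrightarrow> x j a"
    and T: "\<And>a. a \<in> A i \<Longrightarrow> (\<lambda>k. T k a) \<longlonglongrightarrow> t a" and t: "mixed_strategy (A i) t"
  shows "best_reply n A \<theta> x i t"
  unfolding best_reply_def
proof (intro conjI allI impI t)
  fix t' assume t': "mixed_strategy (A i) t'"
  have dev: "(\<lambda>k. mlext n A \<theta> ((X k)(i := t'))) \<longlonglongrightarrow> mlext n A \<theta> (x(i := t'))"
    using X by (intro mlext_tendsto) simp
  have own: "(\<lambda>k. mlext n A \<theta> ((X k)(i := T k))) \<longlonglongrightarrow> mlext n A \<theta> (x(i := t))"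
    using X T by (intro mlext_tendsto) auto
  have "mlext n A \<theta> ((X k)(i := t')) \<le> mlext n A \<theta> ((X k)(i := T k))" for k
    using br[of k] t' by (simp add: best_reply_def)
  then show "mlext n A \<theta> (x(i := t')) \<le> mlext n A \<theta> (x(i := t))"
    by (intro LIMSEQ_le[OF dev own]) simp
qed

lemma mixed_profiles_convergent_subseq:
  fixes R :: "nat \<Rightarrow> nat \<Rightarrow> 'a \<Rightarrow> real"
  assumes finite_A: "\<And>i. i < n \<Longrightarrow> finite (A i)" and R: "\<And>k i. i < n \<Longrightarrow> mixed_strategy (A i) (R k i)"
  shows "\<exists>\<phi> r. strict_mono \<phi> \<and> (\<forall>i<n. mixed_strategy (A i) (r i)) \<and>
    (\<forall>i<n. \<forall>a\<in>A i. (\<lambda>k. R (\<phi> k) i a) \<longlonglongrightarrow> r i a)"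
proof -
  have "\<bar>R k i a\<bar> \<le> 1" if "(i, a) \<in> Sigma {..<n} A" for k i a
    using that mixed_strategy_bounds[OF R finite_A, of i k a] by auto
  then obtain \<phi> l where \<phi>: "strict_mono \<phi>"
    and lim: "\<forall>s\<in>Sigma {..<n} A. (\<lambda>k. R (\<phi> k) (fst s) (snd s)) \<longlonglongrightarrow> l s"
    using finite_bounded_imp_convergent_subseq[of "Sigma {..<n} A" "\<lambda>k s. R k (fst s) (snd s)" 1] finite_A
    by force
  define r where "r i a = (if a \<in> A i then l (i, a) else 0)" for i a
  have conv: "(\<lambda>k. R (\<phi> k) i a) \<longlonglongrightarrow> r i a" if "i < n" "a \<in> A i" for i a
    using lim that by (force simp: r_def)
  moreover have "mixed_strategy (A i) (r i)" if "i < n" for i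
    using finite_A[OF that] R[OF that] conv[OF that] by (rule mixed_strategy_limit) (simp_all add: r_def)
  ultimately show ?thesis using \<phi> by blast
qed

lemma entry_aggregate_tendsto:
  assumes eps: "\<And>j. j \<in> J \<Longrightarrow> (\<lambda>k. E k j) \<longlonglongrightarrow> 0"
    and R: "\<And>k. j \<in> J \<Longrightarrow> \<bar>M k j a - R k j a\<bar> \<le> 1" and lim: "(\<lambda>k. R k j a) \<longlonglongrightarrow> r j a"
  shows "(\<lambda>k. entry_aggregate J (E k) (R k) (M k) j a) \<longlonglongrightarrow> r j a"
proof (cases "j \<in> J")
  case True
  have "(\<lambda>k. E k j * (M k j a - R k j a)) \<longlonglongrightarrow> 0"
  proof (rule Lim_null_comparison[OF always_eventually tendsto_rabs_zero[OF eps[OF True]]], intro allI)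
    show "norm (E k j * (M k j a - R k j a)) \<le> \<bar>E k j\<bar>" for k
      using R[OF True, of k] by (simp add: abs_mult mult_left_le)
  qed
  from tendsto_add[OF lim this] show ?thesis
    using True by (simp add: entry_aggregate_def algebra_simps)
qed (simp add: entry_aggregate_def lim)

lemma post_entry_eq_limit_is_nash:
  assumes finite_A: "\<And>i. i < n \<Longrightarrow> finite (A i)"
    and eps: "\<And>j. j \<in> J \<Longrightarrow> (\<lambda>k. E k j) \<longlonglongrightarrow> 0" and J: "J \<subseteq> {..<n}"
    and eq: "\<And>k. post_entry_eq n A \<pi> J \<theta>m (E k) (R k) (M k)"
    and lim: "\<And>i a. i < n \<Longrightarrow> a \<in> A i \<Longrightarrow> (\<lambda>k. R k i a) \<longlonglongrightarrow> r i a"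
    and r: "\<And>i. i < n \<Longrightarrow> mixed_strategy (A i) (r i)"
  shows "nash_eq n A \<pi> r"
  unfolding nash_eq_iff_best_reply mixed_profile_def
proof (intro conjI allI impI r)
  fix i assume i: "i < n"
  have bounded: "\<bar>M k j a - R k j a\<bar> \<le> 1" if "j \<in> J" for k j a
  proof -
    have "j < n" using J that by auto
    then have "mixed_strategy (A j) (M k j)" "mixed_strategy (A j) (R k j)"
      using eq[of k] that by (auto simp: post_entry_eq_def best_reply_def)
    then show ?thesis
      using mixed_strategy_bounds[OF _ finite_A[OF \<open>j < n\<close>]] by (smt (verit))
  qed
  show "best_reply n A (\<pi> i) r i (r i)"
  proof (rule best_reply_limit[where A = A and T = "\<lambda>k. R k i", OF i _ _ lim[OF i] r[OF i]])
    show "best_reply n A (\<pi> i) (entry_aggregate J (E k) (R k) (M k)) i (R k i)" for k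
      using eq[of k] i by (simp add: post_entry_eq_def)
    show "(\<lambda>k. entry_aggregate J (E k) (R k) (M k) j a) \<longlonglongrightarrow> r j a" if "j < n" "a \<in> A j" for j a
      using eps bounded lim[OF that] by (rule entry_aggregate_tendsto)
  qed
qed

lemma post_entry_eqs_subseq_tendsto_unique_nash:
  assumes finite_A: "\<And>i. i < n \<Longrightarrow> finite (A i)" and J: "J \<subseteq> {..<n}"
    and une: "unique_nash_eq n A \<pi> \<sigma>"
    and eps: "\<And>j. j \<in> J \<Longrightarrow> (\<lambda>k. E k j) \<longlonglongrightarrow> 0"
    and eq: "\<And>k. post_entry_eq n A \<pi> J \<theta>m (E k) (R k) (M k)"
  shows "\<exists>\<phi>. strict_mono \<phi> \<and> (\<forall>i<n. \<forall>a\<in>A i. (\<lambda>k. R (\<phi> k) i a) \<longlonglongrightarrow> \<sigma> i a)"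
proof -
  have R_mixed: "mixed_strategy (A i) (R k i)" if "i < n" for k i
    using eq[of k] that by (simp add: post_entry_eq_def best_reply_def)
  have "\<exists>\<phi> r. strict_mono \<phi> \<and> (\<forall>i<n. mixed_strategy (A i) (r i)) \<and>
    (\<forall>i<n. \<forall>a\<in>A i. (\<lambda>k. R (\<phi> k) i a) \<longlonglongrightarrow> r i a)"
    by (rule mixed_profiles_convergent_subseq[where A = A and R = R, OF finite_A R_mixed])
  then obtain \<phi> r where \<phi>: "strict_mono \<phi>" and r: "\<And>i. i < n \<Longrightarrow> mixed_strategy (A i) (r i)"
    and lim: "\<And>i a. i < n \<Longrightarrow> a \<in> A i \<Longrightarrow> (\<lambda>k. R (\<phi> k) i a) \<longlonglongrightarrow> r i a"
    by blast
  have eps_\<phi>: "(\<lambda>k. E (\<phi> k) j) \<longlonglongrightarrow> 0" if "j \<in> J" for j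
    using LIMSEQ_subseq_LIMSEQ[OF eps[OF that] \<phi>] by (simp add: o_def)
  have eq_\<phi>: "post_entry_eq n A \<pi> J \<theta>m (E (\<phi> k)) (R (\<phi> k)) (M (\<phi> k))" for k
    using eq .
  have "nash_eq n A \<pi> r"
    by (rule post_entry_eq_limit_is_nash[where E = "\<lambda>k. E (\<phi> k)" and R = "\<lambda>k. R (\<phi> k)"
          and M = "\<lambda>k. M (\<phi> k)", OF finite_A eps_\<phi> J eq_\<phi> lim r])
  then have "r i = \<sigma> i" if "i < n" for i
    using une that unfolding unique_nash_eq_def by blast
  with \<phi> lim show ?thesis by auto
qed

lemma post_entry_eq_near_unique_nash:
  assumes finite_A: "\<And>i. i < n \<Longrightarrow> finite (A i)" and J: "J \<subseteq> {..<n}"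
    and une: "unique_nash_eq n A \<pi> \<sigma>" and \<eta>: "0 < \<eta>"
  shows "\<exists>\<epsilon>0>0. \<forall>\<epsilon> r m. (\<forall>j\<in>J. 0 \<le> \<epsilon> j \<and> \<epsilon> j < \<epsilon>0) \<longrightarrow> post_entry_eq n A \<pi> J \<theta>m \<epsilon> r m \<longrightarrow>
     (\<forall>i<n. strat_dist (A i) (r i) (\<sigma> i) \<le> \<eta>)"
proof (rule ccontr)
  assume "\<not> ?thesis"
  then have "\<forall>k. \<exists>\<epsilon> r m. (\<forall>j\<in>J. 0 \<le> \<epsilon> j \<and> \<epsilon> j < 1 / Suc k) \<and> post_entry_eq n A \<pi> J \<theta>m \<epsilon> r m \<and>
      \<not> (\<forall>i<n. strat_dist (A i) (r i) (\<sigma> i) \<le> \<eta>)"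
    by (metis of_nat_0_less_iff zero_less_Suc zero_less_divide_1_iff)
  then obtain E R M where E: "\<And>k j. j \<in> J \<Longrightarrow> 0 \<le> E k j \<and> E k j < 1 / Suc k"
    and eq: "\<And>k. post_entry_eq n A \<pi> J \<theta>m (E k) (R k) (M k)"
    and far: "\<And>k. \<exists>i<n. \<eta> < strat_dist (A i) (R k i) (\<sigma> i)"
    by (metis not_le)
  have eps: "(\<lambda>k. E k j) \<longlonglongrightarrow> 0" if "j \<in> J" for j
    by (rule Lim_null_comparison[OF always_eventually LIMSEQ_Suc[OF lim_1_over_n]])
      (use E[OF that] in \<open>simp add: less_imp_le\<close>)
  have "\<exists>\<phi>. strict_mono \<phi> \<and> (\<forall>i<n. \<forall>a\<in>A i. (\<lambda>k. R (\<phi> k) i a) \<longlonglongrightarrow> \<sigma> i a)"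
    by (rule post_entry_eqs_subseq_tendsto_unique_nash[where E = E and R = R, OF finite_A J une eps eq])
  then obtain \<phi> where lim: "\<And>i a. i < n \<Longrightarrow> a \<in> A i \<Longrightarrow> (\<lambda>k. R (\<phi> k) i a) \<longlonglongrightarrow> \<sigma> i a"
    by blast
  have "(\<lambda>k. strat_dist (A i) (R (\<phi> k) i) (\<sigma> i)) \<longlonglongrightarrow> strat_dist (A i) (\<sigma> i) (\<sigma> i)" if "i < n" for i
    unfolding strat_dist_def using lim[OF that] by (intro tendsto_intros) auto
  then have "\<forall>i\<in>{..<n}. \<forall>\<^sub>F k in sequentially. strat_dist (A i) (R (\<phi> k) i) (\<sigma> i) < \<eta>"
    using \<eta> by (auto simp: strat_dist_def dest: order_tendstoD(2))
  then have "\<forall>\<^sub>F k in sequentially. \<forall>i\<in>{..<n}. strat_dist (A i) (R (\<phi> k) i) (\<sigma> i) < \<eta>"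
    by (simp add: eventually_ball_finite)
  then obtain k where "\<forall>i<n. strat_dist (A i) (R (\<phi> k) i) (\<sigma> i) < \<eta>"
    by (auto simp: eventually_sequentially)
  with far[of "\<phi> k"] show False by auto
qed

theorem robust_to_entry_unique:
  assumes finite_A: "\<And>i. i < n \<Longrightarrow> finite (A i)" and nonempty_A: "\<And>i. i < n \<Longrightarrow> A i \<noteq> {}"
    and une: "unique_nash_eq n A \<pi> \<sigma>"
  shows "robust_to_entry n A \<pi> \<sigma>"
  unfolding robust_to_entry_def
proof (intro allI impI)
  fix J \<theta>m and \<eta> :: real assume h: "J \<subseteq> {..<n} \<and> 0 < \<eta>"
  then have J: "J \<subseteq> {..<n}" and \<eta>: "0 < \<eta>" by auto
  have "\<exists>\<epsilon>0>0. \<forall>\<epsilon> r m. (\<forall>j\<in>J. 0 \<le> \<epsilon> j \<and> \<epsilon> j < \<epsilon>0) \<longrightarrow> post_entry_eq n A \<pi> J \<theta>m \<epsilon> r m \<longrightarrow>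
      (\<forall>i<n. strat_dist (A i) (r i) (\<sigma> i) \<le> \<eta>)"
    by (rule post_entry_eq_near_unique_nash[OF finite_A J une \<eta>])
  then obtain \<epsilon>0 where "0 < \<epsilon>0" and near: "\<And>\<epsilon> r m. \<forall>j\<in>J. 0 \<le> \<epsilon> j \<and> \<epsilon> j < \<epsilon>0 \<Longrightarrow>
      post_entry_eq n A \<pi> J \<theta>m \<epsilon> r m \<Longrightarrow> \<forall>i<n. strat_dist (A i) (r i) (\<sigma> i) \<le> \<eta>"
    by blast
  have "nash_eq n A \<pi> \<sigma>" using une unfolding unique_nash_eq_def by blast
  then have game: "partial_entry_game n A J {..<n} \<sigma>"
    using finite_A nonempty_A J by unfold_locales (auto simp: nash_eq_def mixed_profile_def)
  show "\<exists>\<epsilon>0>0. \<forall>\<epsilon>. (\<forall>j\<in>J. 0 < \<epsilon> j \<and> \<epsilon> j < \<epsilon>0) \<longrightarrow>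
      (\<exists>r m. post_entry_eq n A \<pi> J \<theta>m \<epsilon> r m \<and> (\<forall>i<n. strat_dist (A i) (r i) (\<sigma> i) \<le> \<eta>))"
  proof (intro exI[of _ \<epsilon>0] conjI allI impI \<open>0 < \<epsilon>0\<close>)
    fix \<epsilon> assume eps: "\<forall>j\<in>J. 0 < \<epsilon> j \<and> \<epsilon> j < \<epsilon>0"
    obtain r m where "\<And>i. i < n \<Longrightarrow> best_reply n A (\<pi> i) (entry_aggregate J \<epsilon> r m) i (r i)"
      and "\<And>j. j \<in> J \<Longrightarrow> best_reply n A (\<theta>m j) (entry_aggregate J \<epsilon> r m) j (m j)"
      by (rule partial_entry_eq_exists[where \<pi> = \<pi> and \<theta>m = \<theta>m and \<epsilon> = \<epsilon>, OF game]) auto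
    then have eq: "post_entry_eq n A \<pi> J \<theta>m \<epsilon> r m" by (simp add: post_entry_eq_def)
    have "\<forall>j\<in>J. 0 \<le> \<epsilon> j \<and> \<epsilon> j < \<epsilon>0" using eps by auto
    with eq show "\<exists>r m. post_entry_eq n A \<pi> J \<theta>m \<epsilon> r m \<and> (\<forall>i<n. strat_dist (A i) (r i) (\<sigma> i) \<le> \<eta>)"
      using near by blast
  qed
qed

theorem mainTheorem12:
  fixes n :: nat and A :: "nat \<Rightarrow> 'a set" and \<pi> :: "nat \<Rightarrow> 'a ptype"
    and \<sigma> :: "nat \<Rightarrow> 'a \<Rightarrow> real"
  assumes "1 \<le> n"
    and "\<forall>i<n. finite (A i) \<and> A i \<noteq> {}"
    and "mixed_profile n A \<sigma>"
    and "strict_nash_eq n A \<pi> \<sigma> \<or> (nash_eq n A \<pi> \<sigma> \<and> completely_mixed n A \<sigma>)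
         \<or> unique_nash_eq n A \<pi> \<sigma>"
  shows "stable_no_obs n A \<pi> \<sigma>"
proof -
  have finite_A: "\<And>i. i < n \<Longrightarrow> finite (A i)" and nonempty_A: "\<And>i. i < n \<Longrightarrow> A i \<noteq> {}"
    using assms(2) by auto
  from assms(4) have "nash_eq n A \<pi> \<sigma> \<and> robust_to_entry n A \<pi> \<sigma>"
  proof (elim disjE)
    assume sne: "strict_nash_eq n A \<pi> \<sigma>"
    then show ?thesis
      using robust_to_entry_strict[where A = A, OF finite_A nonempty_A sne] by (simp add: strict_nash_eq_def)
  next
    assume "nash_eq n A \<pi> \<sigma> \<and> completely_mixed n A \<sigma>"
    then show ?thesis
      using robust_to_entry_completely_mixed[where A = A, OF finite_A nonempty_A] by blast
  next
    assume une: "unique_nash_eq n A \<pi> \<sigma>"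
    then have "nash_eq n A \<pi> \<sigma>" unfolding unique_nash_eq_def by blast
    with une show ?thesis
      using robust_to_entry_unique[where A = A, OF finite_A nonempty_A] by blast
  qed
  then show ?thesis
    using stable_no_obs_if_robust_to_entry by blast
qed

end
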